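(* Let $(g,dh,\mathbb{T}^2\setminus\{E_1,E_2\})$ be the Weierstrass data of a periodic genus-one helicoid. Then there is a non-trivial biholomorphic involution $I$ of $\mathbb{T}^2$ with $I(E_1)=E_2$. Moreover, $I^*dh=-dh$ and $I^*\frac{dg}{g}=-\frac{dg}{g}$.
   Context: A periodic genus-one helicoid is (after a homothety) given by Weierstrass data $(g,dh,\mathbb{T}^2\setminus\{E_1,E_2\})$, where $\mathbb{T}^2$ is a conformal torus and $E_1\neq E_2$ are points of it, such that: $g$ extends meromorphically to $\mathbb{T}^2$ with a zero at $E_1$ and a pole at $E_2$; $dh$ extends meromorphically to $\mathbb{T}^2$ with simple poles at $E_1,E_2$, with residue $-i$ at $E_1$ and $i$ at $E_2$; on $\mathbb{T}^2\setminus\{E_1,E_2\}$, $dh$ is holomorphic, $g\,dh$ and $g^{-1}dh$ are holomorphic and do not vanish simultaneously, and the period conditions $\int_\gamma g\,dh=\overline{\int_\gamma g^{-1}dh}$, $\mathrm{Re}\int_\gamma dh=0$ hold for all closed curves except that the vertical periods around $E_1,E_2$ need not vanish. The surface $\mathrm{Re}\int\left(\tfrac12(g^{-1}-g),\tfrac{i}{2}(g^{-1}+g),1\right)dh$ is then invariant under a screw motion and is required to be asymptotic to a helicoid; in this normalization this is equivalent to the one-form $\frac{dg}{g}-i\,dh$ having no poles at $E_1,E_2$. *)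

theory Defs
  imports "HOL-Complex_Analysis.Complex_Analysis"
begin

text \<open>The lattice generated by w1, w2; the conformal torus is the quotient of the
  complex plane by it (when w1, w2 are R-linearly independent).\<close>
definition lattice :: "complex \<Rightarrow> complex \<Rightarrow> complex set" where
  "lattice w1 w2 = {of_int m * w1 + of_int n * w2 | m n. True}"

definition lattice_gens :: "complex \<Rightarrow> complex \<Rightarrow> bool" where
  "lattice_gens w1 w2 \<longleftrightarrow> Im (w2 * cnj w1) \<noteq> 0"

definition lifted_points :: "complex \<Rightarrow> complex \<Rightarrow> complex set \<Rightarrow> complex set" where
  "lifted_points w1 w2 E = {e + l | e l. e \<in> E \<and> l \<in> lattice w1 w2}"

text \<open>A closed curve on the torus avoiding the punctures, given by a lift to the plane.\<close>
definition torus_closed_curve :: "complex \<Rightarrow> complex \<Rightarrow> complex set \<Rightarrow> (real \<Rightarrow> complex) \<Rightarrow> bool" where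
  "torus_closed_curve w1 w2 P \<gamma> \<longleftrightarrow> valid_path \<gamma> \<and> path_image \<gamma> \<inter> P = {} \<and>
      pathfinish \<gamma> - pathstart \<gamma> \<in> lattice w1 w2"

end

theory Submission
  imports Defs
begin

text \<open>Write \<open>dh = h dz\<close>. The involution is \<open>I z = E1 + E2 - z\<close>. The difference \<open>h z - h (I z)\<close> is doubly
  periodic and its simple poles at the ends cancel, since the residues of \<open>h\<close> at \<open>E1\<close> and \<open>E2\<close>
  are opposite; so it is constant, and being odd under \<open>I\<close> it vanishes. For \<open>g\<close>, the
  helicoidal end condition says that the residue of \<open>dg/g\<close> is \<open>i\<close> times that of \<open>h\<close>, so \<open>g\<close>
  has a simple zero at \<open>E1\<close> and a simple pole at \<open>E2\<close>. Away from the ends \<open>|ord g| = ord h\<close>,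
  and the argument principle on a period parallelogram shows that \<open>h\<close> has exactly two further
  zeros, both simple, where \<open>g\<close> has orders \<open>1\<close> and \<open>-1\<close>. The symmetry of \<open>h\<close> permutes them and
  fixes neither (a simple zero fixed by \<open>I\<close> would be a critical point of \<open>h\<close>). Hence
  \<open>g z \<cdot> g (I z)\<close> has no zeros or poles, so it is constant, which is the claim for \<open>dg/g\<close>.
  Neither the period conditions nor the value of \<open>g\<close> at \<open>E1\<close> are needed.\<close>

section \<open>Lattices and period parallelograms\<close>

lemma lattice_of_int_comb: "of_int m * u + of_int n * v \<in> lattice u v"
  unfolding lattice_def by blast

lemma lattice_0 [simp]: "0 \<in> lattice u v"
  using lattice_of_int_comb[of 0 u 0 v] by simp

lemma lattice_generators: "u \<in> lattice u v" "v \<in> lattice u v"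
  using lattice_of_int_comb[of 1 u 0 v] lattice_of_int_comb[of 0 u 1 v] by simp_all

lemma lattice_add: "a \<in> lattice u v \<Longrightarrow> b \<in> lattice u v \<Longrightarrow> a + b \<in> lattice u v"
proof -
  assume "a \<in> lattice u v" "b \<in> lattice u v"
  then obtain m n m' n' where "a = of_int m * u + of_int n * v" "b = of_int m' * u + of_int n' * v"
    unfolding lattice_def by blast
  hence "a + b = of_int (m + m') * u + of_int (n + n') * v" by (simp add: algebra_simps)
  thus ?thesis by (simp only: lattice_of_int_comb)
qed

lemma lattice_uminus: "a \<in> lattice u v \<Longrightarrow> - a \<in> lattice u v"
proof -
  assume "a \<in> lattice u v"
  then obtain m n where "a = of_int m * u + of_int n * v" unfolding lattice_def by blast
  hence "- a = of_int (- m) * u + of_int (- n) * v" by (simp add: algebra_simps)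
  thus ?thesis by (simp only: lattice_of_int_comb)
qed

lemma lattice_diff: "a \<in> lattice u v \<Longrightarrow> b \<in> lattice u v \<Longrightarrow> a - b \<in> lattice u v"
  using lattice_add[of a u v "- b"] lattice_uminus[of b u v] by simp

lemma lattice_diff_commute: "a - b \<in> lattice u v \<longleftrightarrow> b - a \<in> lattice u v"
  using lattice_uminus[of "a - b" u v] lattice_uminus[of "b - a" u v] by auto

lemma mem_lifted_points_iff: "z \<in> lifted_points u v E \<longleftrightarrow> (\<exists>e\<in>E. z - e \<in> lattice u v)"
proof
  assume "z \<in> lifted_points u v E"
  then obtain e l where "z = e + l" "e \<in> E" "l \<in> lattice u v" unfolding lifted_points_def by blast
  thus "\<exists>e\<in>E. z - e \<in> lattice u v" by (intro bexI[of _ e]) simp_all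
next
  assume "\<exists>e\<in>E. z - e \<in> lattice u v"
  then obtain e where "e \<in> E" "z - e \<in> lattice u v" by blast
  moreover have "z = e + (z - e)" by simp
  ultimately show "z \<in> lifted_points u v E" unfolding lifted_points_def by blast
qed

lemma periodic_of_int_multiple:
  assumes "\<forall>z. f (z + u) = f z"
  shows "f (z + of_int m * u) = f z"
proof (induction m arbitrary: z rule: int_induct[where k = 0])
  case (step1 i z)
  have "f (z + of_int (i + 1) * u) = f ((z + of_int i * u) + u)" by (simp add: algebra_simps)
  thus ?case using assms step1 by simp
next
  case (step2 i z)
  have "f (z + of_int i * u) = f ((z + of_int (i - 1) * u) + u)" by (simp add: algebra_simps)
  thus ?case using assms step2 by simp
qed simp

lemma periodic_lattice:
  assumes "\<forall>z. f (z + u) = f z \<and> f (z + v) = f z" "l \<in> lattice u v"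
  shows "f (z + l) = f z"
proof -
  obtain m n where l: "l = of_int m * u + of_int n * v" using assms(2) unfolding lattice_def by blast
  have "f (z + l) = f ((z + of_int n * v) + of_int m * u)" by (simp add: l algebra_simps)
  also have "\<dots> = f (z + of_int n * v)" by (rule periodic_of_int_multiple) (use assms in auto)
  also have "\<dots> = f z" by (rule periodic_of_int_multiple) (use assms in auto)
  finally show ?thesis .
qed

text \<open>Cramer's rule for \<open>z = s u + t v\<close> with real \<open>s\<close>, \<open>t\<close>.\<close>

definition coord1 :: "complex \<Rightarrow> complex \<Rightarrow> complex \<Rightarrow> real" where
  "coord1 u v z = Im (z * cnj v) / Im (u * cnj v)"

definition coord2 :: "complex \<Rightarrow> complex \<Rightarrow> complex \<Rightarrow> real" where
  "coord2 u v z = Im (z * cnj u) / Im (v * cnj u)"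

lemma coord_commute: "coord1 v u = coord2 u v" "coord2 v u = coord1 u v"
  by (simp_all add: fun_eq_iff coord1_def coord2_def)

lemma coord_decomp:
  assumes "Im (v * cnj u) \<noteq> 0"
  shows "z = of_real (coord1 u v z) * u + of_real (coord2 u v z) * v"
proof -
  define D where "D = Re u * Im v - Im u * Re v"
  have D: "D \<noteq> 0" using assms by (simp add: D_def algebra_simps)
  have e: "Im (u * cnj v) = - D" "Im (v * cnj u) = D" by (simp_all add: D_def algebra_simps)
  have c1: "coord1 u v z = (Re z * Im v - Im z * Re v) / D"
    unfolding coord1_def e by (simp add: divide_simps)
  have c2: "coord2 u v z = (Im z * Re u - Re z * Im u) / D"
    unfolding coord2_def e by (simp add: algebra_simps)
  have "(Re z * Im v - Im z * Re v) * Re u + (Im z * Re u - Re z * Im u) * Re v = Re z * D"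
    "(Re z * Im v - Im z * Re v) * Im u + (Im z * Re u - Re z * Im u) * Im v = Im z * D"
    by (simp_all add: D_def algebra_simps)
  hence "Re z = (Re z * Im v - Im z * Re v) / D * Re u + (Im z * Re u - Re z * Im u) / D * Re v"
    "Im z = (Re z * Im v - Im z * Re v) / D * Im u + (Im z * Re u - Re z * Im u) / D * Im v"
    using D by (simp_all add: field_simps)
  thus ?thesis unfolding c1 c2 by (simp add: complex_eq_iff)
qed

lemma coord_linear:
  "coord1 u v (of_real a * x + of_real b * y) = a * coord1 u v x + b * coord1 u v y"
  "coord2 u v (of_real a * x + of_real b * y) = a * coord2 u v x + b * coord2 u v y"
proof -
  have "Im ((of_real a * x + of_real b * y) * cnj v) = a * Im (x * cnj v) + b * Im (y * cnj v)"
    "Im ((of_real a * x + of_real b * y) * cnj u) = a * Im (x * cnj u) + b * Im (y * cnj u)"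
    by (simp_all add: algebra_simps)
  thus "coord1 u v (of_real a * x + of_real b * y) = a * coord1 u v x + b * coord1 u v y"
    "coord2 u v (of_real a * x + of_real b * y) = a * coord2 u v x + b * coord2 u v y"
    unfolding coord1_def coord2_def by (simp_all add: add_divide_distrib)
qed

lemma coord_diff: "coord1 u v (x - y) = coord1 u v x - coord1 u v y"
  "coord2 u v (x - y) = coord2 u v x - coord2 u v y"
  using coord_linear[of u v 1 x "-1" y] by simp_all

lemma coord_basis_comb:
  assumes "Im (v * cnj u) \<noteq> 0"
  shows "coord1 u v (of_real s * u + of_real t * v) = s" "coord2 u v (of_real s * u + of_real t * v) = t"
proof -
  have e: "Im (u * cnj v) = - Im (v * cnj u)" by simp
  have "Im ((of_real s * u + of_real t * v) * cnj v) = s * Im (u * cnj v)"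
    "Im ((of_real s * u + of_real t * v) * cnj u) = t * Im (v * cnj u)"
    by (simp_all add: algebra_simps)
  thus "coord1 u v (of_real s * u + of_real t * v) = s" "coord2 u v (of_real s * u + of_real t * v) = t"
    using assms unfolding coord1_def coord2_def e by simp_all
qed

lemma coord_lattice_Ints:
  assumes "Im (v * cnj u) \<noteq> 0" "l \<in> lattice u v"
  shows "coord1 u v l \<in> \<int>" "coord2 u v l \<in> \<int>"
proof -
  obtain m n where "l = of_int m * u + of_int n * v" using assms(2) unfolding lattice_def by blast
  hence "l = of_real (of_int m) * u + of_real (of_int n) * v" by simp
  thus "coord1 u v l \<in> \<int>" "coord2 u v l \<in> \<int>"
    using coord_basis_comb[OF assms(1), of "of_int m" "of_int n"] by simp_all
qed

definition closed_cell :: "complex \<Rightarrow> complex \<Rightarrow> complex \<Rightarrow> complex set" where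
  "closed_cell z0 u v = {p. coord1 u v (p - z0) \<in> {0..1} \<and> coord2 u v (p - z0) \<in> {0..1}}"

definition open_cell :: "complex \<Rightarrow> complex \<Rightarrow> complex \<Rightarrow> complex set" where
  "open_cell z0 u v = {p. coord1 u v (p - z0) \<in> {0<..<1} \<and> coord2 u v (p - z0) \<in> {0<..<1}}"

lemma cell_commute: "closed_cell z0 v u = closed_cell z0 u v" "open_cell z0 v u = open_cell z0 u v"
  unfolding closed_cell_def open_cell_def coord_commute[of u v] by auto

lemma open_cell_subset_closed_cell: "open_cell z0 u v \<subseteq> closed_cell z0 u v"
  unfolding open_cell_def closed_cell_def by auto

lemma convex_closed_cell: "convex (closed_cell z0 u v)"
  unfolding convex_def
proof (intro ballI allI impI)
  fix x y and a b :: real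
  assume xy: "x \<in> closed_cell z0 u v" "y \<in> closed_cell z0 u v" and ab: "0 \<le> a" "0 \<le> b" "a + b = 1"
  have "of_real a + of_real b = (1 :: complex)" using ab(3) by (metis of_real_1 of_real_add)
  hence "z0 = of_real a * z0 + of_real b * z0" by (metis distrib_right mult_1)
  hence "a *\<^sub>R x + b *\<^sub>R y - z0 = of_real a * (x - z0) + of_real b * (y - z0)"
    by (simp add: scaleR_conv_of_real algebra_simps)
  hence c: "coord1 u v (a *\<^sub>R x + b *\<^sub>R y - z0) = a * coord1 u v (x - z0) + b * coord1 u v (y - z0)"
    "coord2 u v (a *\<^sub>R x + b *\<^sub>R y - z0) = a * coord2 u v (x - z0) + b * coord2 u v (y - z0)"
    by (simp_all add: coord_linear)
  have "a * p + b * q \<in> {0..1}" if "p \<in> {0..1}" "q \<in> {0..1}" for p q :: real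
    using that ab mult_left_le[of p a] mult_left_le[of q b] by auto
  thus "a *\<^sub>R x + b *\<^sub>R y \<in> closed_cell z0 u v" using xy unfolding closed_cell_def mem_Collect_eq c by blast
qed

lemma norm_le_closed_cell:
  assumes "Im (v * cnj u) \<noteq> 0" "p \<in> closed_cell z0 u v"
  shows "norm p \<le> norm z0 + norm u + norm v"
proof -
  define a where "a = coord1 u v (p - z0)"
  define b where "b = coord2 u v (p - z0)"
  have ab: "\<bar>a\<bar> \<le> 1" "\<bar>b\<bar> \<le> 1" using assms(2) unfolding a_def b_def closed_cell_def by auto
  have "p = z0 + of_real a * u + of_real b * v"
    using coord_decomp[OF assms(1), of "p - z0"] by (simp add: a_def b_def algebra_simps)
  hence "norm p \<le> norm z0 + norm (of_real a * u) + norm (of_real b * v)"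
    by (metis norm_triangle_ineq order.trans add_right_mono)
  also have "\<dots> \<le> norm z0 + norm u + norm v"
    using ab by (intro add_mono order.refl) (simp_all add: norm_mult mult_left_le_one_le)
  finally show ?thesis .
qed

lemma compact_closed_cell:
  assumes "Im (v * cnj u) \<noteq> 0"
  shows "compact (closed_cell z0 u v)"
  unfolding compact_eq_bounded_closed
proof
  show "bounded (closed_cell z0 u v)"
    using norm_le_closed_cell[OF assms] by (auto simp: bounded_iff)
  have "continuous_on UNIV (\<lambda>p. coord1 u v (p - z0))" "continuous_on UNIV (\<lambda>p. coord2 u v (p - z0))"
    unfolding coord1_def coord2_def using assms by (auto intro!: continuous_intros simp: algebra_simps)
  thus "closed (closed_cell z0 u v)"
    unfolding closed_cell_def atLeastAtMost_iff
    by (intro closed_Collect_conj closed_Collect_le continuous_on_const)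
qed

lemma lattice_translate_into_closed_cell:
  assumes D: "Im (v * cnj u) \<noteq> 0"
  obtains l where "l \<in> lattice u v" "z - l \<in> closed_cell z0 u v"
proof -
  define a where "a = coord1 u v (z - z0)"
  define b where "b = coord2 u v (z - z0)"
  define l where "l = of_int \<lfloor>a\<rfloor> * u + of_int \<lfloor>b\<rfloor> * v"
  have "z - l - z0 = of_real (a - of_int \<lfloor>a\<rfloor>) * u + of_real (b - of_int \<lfloor>b\<rfloor>) * v"
    using coord_decomp[OF D, of "z - z0"] unfolding l_def a_def b_def by (simp add: algebra_simps)
  hence "coord1 u v (z - l - z0) = a - of_int \<lfloor>a\<rfloor>" "coord2 u v (z - l - z0) = b - of_int \<lfloor>b\<rfloor>"
    using coord_basis_comb[OF D] by metis+
  hence "z - l \<in> closed_cell z0 u v" unfolding closed_cell_def by simp linarith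
  moreover have "l \<in> lattice u v" unfolding l_def by (rule lattice_of_int_comb)
  ultimately show ?thesis using that by blast
qed

lemma open_cell_lattice_diff_imp_eq:
  assumes D: "Im (v * cnj u) \<noteq> 0"
    and pq: "p \<in> open_cell z0 u v" "q \<in> open_cell z0 u v" "p - q \<in> lattice u v"
  shows "p = q"
proof -
  have small: "x = 0" if "x \<in> \<int>" "\<bar>x\<bar> < 1" for x :: real using that by (auto elim!: Ints_cases)
  have "coord1 u v (p - q) = coord1 u v (p - z0) - coord1 u v (q - z0)"
    "coord2 u v (p - q) = coord2 u v (p - z0) - coord2 u v (q - z0)"
    using coord_diff[of u v "p - z0" "q - z0"] by simp_all
  hence "\<bar>coord1 u v (p - q)\<bar> < 1" "\<bar>coord2 u v (p - q)\<bar> < 1"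
    using pq(1,2) unfolding open_cell_def by auto
  hence "coord1 u v (p - q) = 0" "coord2 u v (p - q) = 0"
    using small coord_lattice_Ints[OF D pq(3)] by blast+
  thus ?thesis using coord_decomp[OF D, of "p - q"] by simp
qed

lemma doubly_periodic_entire_const:
  assumes "Im (v * cnj u) \<noteq> 0" "f holomorphic_on UNIV" "\<forall>z. f (z + u) = f z \<and> f (z + v) = f z"
  shows "f constant_on UNIV"
proof (rule Liouville_theorem[OF assms(2)])
  have "range f \<subseteq> f ` closed_cell 0 u v"
  proof
    fix y assume "y \<in> range f"
    then obtain z where y: "y = f z" by auto
    obtain l where l: "l \<in> lattice u v" "z - l \<in> closed_cell 0 u v"
      using lattice_translate_into_closed_cell[OF assms(1)] by blast
    have "f z = f ((z - l) + l)" by simp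
    also have "\<dots> = f (z - l)" by (rule periodic_lattice[OF assms(3) l(1)])
    finally show "y \<in> f ` closed_cell 0 u v" using y l(2) by blast
  qed
  moreover have "compact (f ` closed_cell 0 u v)"
    by (intro compact_continuous_image compact_closed_cell assms(1) holomorphic_on_imp_continuous_on
          holomorphic_on_subset[OF assms(2)]) auto
  ultimately show "bounded (range f)" using compact_imp_bounded bounded_subset by blast
qed

lemma doubly_periodic_meromorphic_const:
  assumes "Im (v * cnj u) \<noteq> 0" "f meromorphic_on UNIV"
    and per: "\<forall>z. f (z + u) = f z \<and> f (z + v) = f z" and no_pole: "\<forall>z. \<not> is_pole f z"
  obtains C where "\<forall>\<^sub>\<approx>z. f z = C"
proof -
  define G where "G = remove_sings f"
  have lim: "f \<midarrow>z\<rightarrow> G z" for z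
  proof -
    have "not_essential f z"
      by (rule meromorphic_on_not_essential[OF meromorphic_on_subset[OF assms(2)]]) simp
    then obtain c where "f \<midarrow>z\<rightarrow> c" using no_pole unfolding not_essential_def by blast
    thus ?thesis unfolding G_def using remove_sings_eqI by metis
  qed
  have ana: "G analytic_on {z}" for z
    unfolding G_def
    by (rule remove_sings_analytic_at[OF meromorphic_on_isolated_singularity
          [OF meromorphic_on_subset[OF assms(2)]] lim]) auto
  have hol: "G holomorphic_on UNIV"
    by (rule analytic_imp_holomorphic, rule analytic_on_analytic_at[THEN iffD2]) (use ana in blast)
  have per_G: "G (z + c) = G z" if "c = u \<or> c = v" for z c
  proof -
    have "\<forall>w. f (w + c) = f w" using per that by auto
    moreover have "(\<lambda>x. f (x + c)) \<midarrow>(z + c) - c\<rightarrow> G (z + c)" by (rule LIM_offset[OF lim])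
    ultimately have "f \<midarrow>z\<rightarrow> G (z + c)" by simp
    thus ?thesis using lim[of z] tendsto_unique[OF at_neq_bot] by blast
  qed
  have "G constant_on UNIV"
    by (rule doubly_periodic_entire_const[OF assms(1) hol]) (use per_G in auto)
  then obtain C where C: "\<And>z. G z = C" unfolding constant_on_def by auto
  have "\<forall>\<^sub>\<approx>z. G z = f z" unfolding G_def by (rule eventually_remove_sings_eq[OF assms(2)])
  hence "\<forall>\<^sub>\<approx>z. f z = C" by eventually_elim (use C in auto)
  thus ?thesis using that by blast
qed

definition parallelogram_path :: "complex \<Rightarrow> complex \<Rightarrow> complex \<Rightarrow> real \<Rightarrow> complex" where
  "parallelogram_path z0 u v =
     linepath z0 (z0 + u) +++ linepath (z0 + u) (z0 + u + v) +++
     linepath (z0 + u + v) (z0 + v) +++ linepath (z0 + v) z0"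

lemma valid_path_parallelogram_path: "valid_path (parallelogram_path z0 u v)"
  by (simp add: parallelogram_path_def valid_path_join)

lemma pathfinish_parallelogram_path:
  "pathfinish (parallelogram_path z0 u v) = pathstart (parallelogram_path z0 u v)"
  by (simp add: parallelogram_path_def)

lemma path_image_parallelogram_path:
  "path_image (parallelogram_path z0 u v) =
     closed_segment z0 (z0 + u) \<union> closed_segment (z0 + u) (z0 + u + v) \<union>
     closed_segment (z0 + u + v) (z0 + v) \<union> closed_segment (z0 + v) z0"
  by (simp add: parallelogram_path_def path_image_join Un_assoc)

lemma closed_segment_subset_cell_boundary:
  assumes "Im (v * cnj u) \<noteq> 0" "s1 \<in> {0..1}" "s2 \<in> {0..1}" "t1 \<in> {0..1}" "t2 \<in> {0..1}"
    and "(s1 = s2 \<and> s1 \<in> {0, 1}) \<or> (t1 = t2 \<and> t1 \<in> {0, 1})"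
  shows "closed_segment (z0 + of_real s1 * u + of_real t1 * v) (z0 + of_real s2 * u + of_real t2 * v)
           \<subseteq> closed_cell z0 u v - open_cell z0 u v"
proof
  fix p
  assume "p \<in> closed_segment (z0 + of_real s1 * u + of_real t1 * v) (z0 + of_real s2 * u + of_real t2 * v)"
  then obtain x where x: "x \<in> {0..1}"
    "p = (1 - x) *\<^sub>R (z0 + of_real s1 * u + of_real t1 * v) + x *\<^sub>R (z0 + of_real s2 * u + of_real t2 * v)"
    unfolding closed_segment_def by auto
  have "p - z0 = of_real ((1 - x) * s1 + x * s2) * u + of_real ((1 - x) * t1 + x * t2) * v"
    unfolding x(2) by (simp add: scaleR_conv_of_real algebra_simps)
  hence c: "coord1 u v (p - z0) = (1 - x) * s1 + x * s2" "coord2 u v (p - z0) = (1 - x) * t1 + x * t2"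
    using coord_basis_comb[OF assms(1)] by metis+
  have conv: "(1 - x) * a + x * b \<in> {0..1}" if "a \<in> {0..1}" "b \<in> {0..1}" for a b :: real
    using that x(1) mult_left_le[of a "1 - x"] mult_left_le[of b x] by auto
  have "coord1 u v (p - z0) \<in> {0..1}" "coord2 u v (p - z0) \<in> {0..1}"
    unfolding c using assms(2-5) conv by blast+
  moreover have "coord1 u v (p - z0) \<in> {0, 1} \<or> coord2 u v (p - z0) \<in> {0, 1}"
    unfolding c using assms(6) by (auto simp: algebra_simps)
  ultimately show "p \<in> closed_cell z0 u v - open_cell z0 u v"
    unfolding closed_cell_def open_cell_def by auto
qed

lemma path_image_parallelogram_path_subset:
  assumes "Im (v * cnj u) \<noteq> 0"
  shows "path_image (parallelogram_path z0 u v) \<subseteq> closed_cell z0 u v - open_cell z0 u v"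
  using closed_segment_subset_cell_boundary[OF assms, of 0 1 0 0 z0]
    closed_segment_subset_cell_boundary[OF assms, of 1 1 0 1 z0]
    closed_segment_subset_cell_boundary[OF assms, of 1 0 1 1 z0]
    closed_segment_subset_cell_boundary[OF assms, of 0 0 1 0 z0]
  unfolding path_image_parallelogram_path by (simp add: add.assoc)

lemma winding_number_parallelogram_path:
  assumes pos: "Im (v * cnj u) > 0" and p: "p \<in> open_cell z0 u v"
  shows "winding_number (parallelogram_path z0 u v) p = 1"
proof -
  have D: "Im (v * cnj u) \<noteq> 0" using pos by simp
  define s where "s = coord1 u v (p - z0)"
  define t where "t = coord2 u v (p - z0)"
  have st: "0 < s" "s < 1" "0 < t" "t < 1" using p unfolding open_cell_def s_def t_def by auto
  have pe: "p = z0 + of_real s * u + of_real t * v"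
    using coord_decomp[OF D, of "p - z0"] by (simp add: s_def t_def algebra_simps)
  have off: "p \<notin> path_image (parallelogram_path z0 u v)"
    using path_image_parallelogram_path_subset[OF D] p by blast
  hence off_sides: "p \<notin> closed_segment z0 (z0 + u)" "p \<notin> closed_segment (z0 + u) (z0 + u + v)"
    "p \<notin> closed_segment (z0 + u + v) (z0 + v)" "p \<notin> closed_segment (z0 + v) z0"
    unfolding path_image_parallelogram_path by auto
  have "Im ((z0 + u - z0) * cnj (z0 + u - p)) = t * Im (v * cnj u)"
    "Im ((z0 + u + v - (z0 + u)) * cnj (z0 + u + v - p)) = (1 - s) * Im (v * cnj u)"
    "Im ((z0 + v - (z0 + u + v)) * cnj (z0 + v - p)) = (1 - t) * Im (v * cnj u)"
    "Im ((z0 - (z0 + v)) * cnj (z0 - p)) = s * Im (v * cnj u)"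
    unfolding pe by (simp_all add: algebra_simps)
  hence "0 < Re (winding_number (linepath z0 (z0 + u)) p)"
    "0 < Re (winding_number (linepath (z0 + u) (z0 + u + v)) p)"
    "0 < Re (winding_number (linepath (z0 + u + v) (z0 + v)) p)"
    "0 < Re (winding_number (linepath (z0 + v) z0) p)"
    using pos st by (auto intro!: winding_number_linepath_pos_lt)
  moreover have "\<bar>Re (winding_number (linepath z0 (z0 + u)) p)\<bar> < 1/2"
    "\<bar>Re (winding_number (linepath (z0 + u) (z0 + u + v)) p)\<bar> < 1/2"
    "\<bar>Re (winding_number (linepath (z0 + u + v) (z0 + v)) p)\<bar> < 1/2"
    "\<bar>Re (winding_number (linepath (z0 + v) z0) p)\<bar> < 1/2"
    using off_sides winding_number_lt_half_linepath by blast+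
  moreover have "winding_number (parallelogram_path z0 u v) p =
      winding_number (linepath z0 (z0 + u)) p + (winding_number (linepath (z0 + u) (z0 + u + v)) p +
      (winding_number (linepath (z0 + u + v) (z0 + v)) p + winding_number (linepath (z0 + v) z0) p))"
    using off_sides unfolding parallelogram_path_def by (simp add: winding_number_join path_image_join)
  ultimately show ?thesis
    using off valid_path_parallelogram_path pathfinish_parallelogram_path
    by (intro winding_number_eq_1) auto
qed

lemma winding_number_parallelogram_path_outside:
  assumes "Im (v * cnj u) \<noteq> 0" "z \<notin> closed_cell z0 u v"
  shows "winding_number (parallelogram_path z0 u v) z = 0"
proof (rule winding_number_zero_outside[OF valid_path_imp_path[OF valid_path_parallelogram_path]
      convex_closed_cell pathfinish_parallelogram_path assms(2)])
  show "path_image (parallelogram_path z0 u v) \<subseteq> closed_cell z0 u v"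
    using path_image_parallelogram_path_subset[OF assms(1)] by blast
qed

lemma contour_integral_linepath_translate:
  "contour_integral (linepath (a + c) (b + c)) f = contour_integral (linepath a b) (\<lambda>z. f (z + c))"
proof -
  have "\<And>x. linepath (a + c) (b + c) x = linepath a b x + c" by (simp add: linepath_def algebra_simps)
  thus ?thesis unfolding contour_integral_integral by simp
qed

text \<open>Opposite sides of the parallelogram are translates of each other, traversed in opposite directions.\<close>

lemma contour_integral_parallelogram_path_periodic:
  assumes cont: "continuous_on (path_image (parallelogram_path z0 u v)) \<phi>"
    and per: "\<forall>z. \<phi> (z + u) = \<phi> z \<and> \<phi> (z + v) = \<phi> z"
  shows "contour_integral (parallelogram_path z0 u v) \<phi> = 0"
proof -
  have int: "\<phi> contour_integrable_on linepath a b"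
    if "closed_segment a b \<subseteq> path_image (parallelogram_path z0 u v)" for a b
    using continuous_on_subset[OF cont that] by (rule contour_integrable_continuous_linepath)
  have sides_int: "\<phi> contour_integrable_on linepath z0 (z0 + u)"
    "\<phi> contour_integrable_on linepath (z0 + u) (z0 + u + v)"
    "\<phi> contour_integrable_on linepath (z0 + u + v) (z0 + v)"
    "\<phi> contour_integrable_on linepath (z0 + v) z0"
    by (rule int, auto simp: path_image_parallelogram_path)+
  have "(\<lambda>z. \<phi> (z + u)) = \<phi>" "(\<lambda>z. \<phi> (z + v)) = \<phi>" using per by auto
  hence "contour_integral (linepath (z0 + v) (z0 + v + u)) \<phi> = contour_integral (linepath z0 (z0 + u)) \<phi>"
    "contour_integral (linepath (z0 + u) (z0 + u + v)) \<phi> = contour_integral (linepath z0 (z0 + v)) \<phi>"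
    using contour_integral_linepath_translate[of z0 v "z0 + u" \<phi>]
      contour_integral_linepath_translate[of z0 u "z0 + v" \<phi>] by (simp_all add: add_ac)
  moreover have "contour_integral (linepath (z0 + u + v) (z0 + v)) \<phi> = - contour_integral (linepath (z0 + v) (z0 + v + u)) \<phi>"
    "contour_integral (linepath (z0 + v) z0) \<phi> = - contour_integral (linepath z0 (z0 + v)) \<phi>"
    using contour_integral_reversepath[of "linepath (z0 + v) (z0 + v + u)" \<phi>]
      contour_integral_reversepath[of "linepath z0 (z0 + v)" \<phi>] by (simp_all add: add_ac)
  moreover have "contour_integral (parallelogram_path z0 u v) \<phi> =
      contour_integral (linepath z0 (z0 + u)) \<phi> + (contour_integral (linepath (z0 + u) (z0 + u + v)) \<phi> +
      (contour_integral (linepath (z0 + u + v) (z0 + v)) \<phi> + contour_integral (linepath (z0 + v) z0) \<phi>))"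
    unfolding parallelogram_path_def using sides_int
    by (simp add: valid_path_join contour_integrable_joinI)
  ultimately show ?thesis by simp
qed

section \<open>Local behaviour of meromorphic functions\<close>

lemma deriv_periodic:
  assumes "\<forall>z. f (z + c) = f z"
  shows "deriv f (z + c) = deriv f z"
proof -
  have "deriv f (z + c) = deriv (f \<circ> (\<lambda>x. z + c + x)) 0" by (rule deriv_shift_0)
  also have "f \<circ> (\<lambda>x. z + c + x) = f \<circ> (\<lambda>x. z + x)"
  proof
    fix x show "(f \<circ> (\<lambda>x. z + c + x)) x = (f \<circ> (\<lambda>x. z + x)) x"
      using assms[rule_format, of "z + x"] by (simp add: algebra_simps)
  qed
  also have "deriv \<dots> 0 = deriv f z" by (rule deriv_shift_0[symmetric])
  finally show ?thesis .
qed

lemma zorder_periodic: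
  fixes f :: "complex \<Rightarrow> complex"
  assumes "\<forall>w. f (w + l) = f w"
  shows "zorder f (z + l) = zorder f z"
proof -
  have "zorder f (z + l) = zorder (\<lambda>u. f (u + (z + l))) 0" by (rule zorder_shift)
  also have "(\<lambda>u. f (u + (z + l))) = (\<lambda>u. f (u + z))"
    using assms by (simp add: add.assoc[symmetric])
  also have "zorder \<dots> 0 = zorder f z" by (rule zorder_shift[symmetric])
  finally show ?thesis .
qed

lemma is_pole_periodic:
  fixes f :: "complex \<Rightarrow> complex"
  assumes "\<forall>w. f (w + l) = f w"
  shows "is_pole f (z + l) \<longleftrightarrow> is_pole f z"
proof -
  have "is_pole f (z + l) \<longleftrightarrow> is_pole (\<lambda>x. f (z + l + x)) 0" by (rule is_pole_shift_0)
  also have "(\<lambda>x. f (z + l + x)) = (\<lambda>x. f (z + x))"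
  proof
    fix x show "f (z + l + x) = f (z + x)" using assms[rule_format, of "z + x"] by (simp add: add_ac)
  qed
  also have "is_pole \<dots> 0 \<longleftrightarrow> is_pole f z" by (rule is_pole_shift_0[symmetric])
  finally show ?thesis .
qed

lemma filtermap_reflect_at: "filtermap (\<lambda>w. c - w) (at z) = at (c - (z::complex))"
proof -
  have "filtermap (\<lambda>w. c - w) (at z) = filtermap (\<lambda>x. x - (- c)) (filtermap uminus (at z))"
    by (simp add: filtermap_filtermap)
  also have "filtermap uminus (at z) = at (- z)" by (simp add: filtermap_at_minus)
  also have "filtermap (\<lambda>x. x - (- c)) (at (- z)) = at (- z - (- c))" by (rule filtermap_at_shift)
  finally show ?thesis by simp
qed

lemma tendsto_reflect:
  assumes "(f \<longlongrightarrow> a) (at (c - z))"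
  shows "((\<lambda>w. f (c - w)) \<longlongrightarrow> a) (at (z::complex))"
  using assms tendsto_compose_filtermap[of f "\<lambda>w. c - w" a "at z"] filtermap_reflect_at[of c z]
  by (simp add: o_def)

lemma zorder_reflect:
  assumes "f meromorphic_on UNIV"
  shows "zorder (\<lambda>w. f (c - w)) z = zorder f (c - z)"
proof -
  define f' where "f' = (\<lambda>y. f (c + y))"
  have "f' meromorphic_on {(-1) * z}"
    unfolding f'_def by (rule meromorphic_on_compose[OF assms]) (auto intro!: analytic_intros)
  hence "zorder (\<lambda>w. f' ((-1) * w)) z = zorder f' ((-1) * z)" by (rule zorder_scale) simp
  also have "\<dots> = zorder (\<lambda>u. f (u + (c - z))) 0" by (subst zorder_shift) (simp add: f'_def algebra_simps)
  also have "\<dots> = zorder f (c - z)" by (rule zorder_shift[symmetric])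
  finally show ?thesis by (simp add: f'_def)
qed

lemma eventually_cosparse_reflect:
  fixes c :: complex
  assumes "\<forall>\<^sub>\<approx>z. P z"
  shows "\<forall>\<^sub>\<approx>z. P (c - z)"
proof -
  have not_limpt: "\<not> y islimpt {x. \<not> P x}" for y
    using assms unfolding eventually_cosparse sparse_in_def by (metis UNIV_I open_UNIV)
  have "\<not> y islimpt {z. \<not> P (c - z)}" for y
  proof
    assume "y islimpt {z. \<not> P (c - z)}"
    hence "(\<lambda>z. c - z) y islimpt (\<lambda>z. c - z) ` {z. \<not> P (c - z)}"
      by (intro islimpt_isCont_image continuous_intros) (auto simp: eventually_at_topological)
    moreover have "(\<lambda>z. c - z) ` {z. \<not> P (c - z)} = {x. \<not> P x}"
      by (auto simp: image_iff intro!: exI[of _ "c - _"])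
    ultimately show False using not_limpt by auto
  qed
  thus ?thesis unfolding eventually_cosparse sparse_in_def by (metis UNIV_I open_UNIV)
qed

lemma eventually_cosparse_imp_frequently_at:
  fixes z :: complex
  assumes "\<forall>\<^sub>\<approx>w. P w"
  shows "\<exists>\<^sub>F w in at z. P w"
  using eventually_cosparse_imp_eventually_at[OF assms, of z UNIV] by (simp add: eventually_frequently)

lemma deriv_eq_0_if_eventually_cosparse_const:
  fixes f :: "complex \<Rightarrow> complex"
  assumes "\<forall>\<^sub>\<approx>w. f w = C" "f field_differentiable (at z)"
  shows "deriv f z = 0"
proof -
  have at: "eventually (\<lambda>w. f w = C) (at z)"
    using eventually_cosparse_imp_eventually_at[OF assms(1), of z UNIV] by simp
  hence "(f \<longlongrightarrow> C) (at z)" by (simp add: tendsto_eventually)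
  moreover have "(f \<longlongrightarrow> f z) (at z)"
    using field_differentiable_imp_continuous_at[OF assms(2)] by (simp add: continuous_at)
  ultimately have "f z = C" using tendsto_unique[OF at_neq_bot] by blast
  hence "eventually (\<lambda>w. f w = C) (nhds z)" using at by (simp add: eventually_nhds_conv_at)
  thus ?thesis using deriv_cong_ev[of f "\<lambda>_. C"] by simp
qed

lemma nicely_meromorphic_nonzero_cosparse:
  assumes "f nicely_meromorphic_on UNIV" "is_pole f z"
  shows "\<forall>\<^sub>\<approx>w. f w \<noteq> 0"
proof -
  have "(\<forall>x\<in>UNIV. f x = 0) \<or> (\<forall>\<^sub>\<approx>x\<in>UNIV. f x \<noteq> 0)"
    by (rule nicely_meromorphic_imp_constant_or_avoid[OF assms(1)]) auto
  moreover have "\<not> (\<forall>x. f x = 0)"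
  proof
    assume "\<forall>x. f x = 0"
    hence "f = (\<lambda>_. 0)" by auto
    thus False using assms(2) by simp
  qed
  ultimately show ?thesis by auto
qed

lemma finite_zeros_bounded:
  fixes f :: "complex \<Rightarrow> complex"
  assumes "\<forall>\<^sub>\<approx>z. f z \<noteq> 0" "bounded B"
  shows "finite {z\<in>B. f z = 0}"
proof -
  have sparse: "{z. f z = 0} sparse_in UNIV" using assms(1) unfolding eventually_cosparse by simp
  have "finite (closure B \<inter> {z. f z = 0})"
    by (rule sparse_in_compact_finite[OF sparse_in_subset[OF sparse]])
       (use assms(2) compact_closure in auto)
  moreover have "{z\<in>B. f z = 0} \<subseteq> closure B \<inter> {z. f z = 0}" using closure_subset by blast
  ultimately show ?thesis by (rule finite_subset[rotated])
qed

lemma zorder_eq_subdegree_laurent_expansion: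
  assumes "f meromorphic_on {z}" "\<exists>\<^sub>F w in at z. f w \<noteq> 0"
  shows "laurent_expansion f z \<noteq> 0" "zorder f z = fls_subdegree (laurent_expansion f z)"
proof -
  have F: "(\<lambda>w. f (z + w)) has_laurent_expansion laurent_expansion f z"
    using meromorphic_on_imp_has_laurent_expansion[OF assms(1)] by simp
  thus nz: "laurent_expansion f z \<noteq> 0"
    using has_laurent_expansion_frequently_nonzero_iff assms(2) by blast
  show "zorder f z = fls_subdegree (laurent_expansion f z)" by (rule has_laurent_expansion_zorder[OF F nz])
qed

lemma is_pole_iff_zorder_neg:
  assumes "f meromorphic_on {z}" "\<exists>\<^sub>F w in at z. f w \<noteq> 0"
  shows "is_pole f z \<longleftrightarrow> zorder f z < 0"
  using has_laurent_expansion_imp_is_pole_iff[OF meromorphic_on_imp_has_laurent_expansion[OF assms(1)]]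
    zorder_eq_subdegree_laurent_expansion[OF assms] by simp

lemma zorder_pos_imp_tendsto_0:
  assumes "f meromorphic_on {z}" "\<exists>\<^sub>F w in at z. f w \<noteq> 0" "zorder f z > 0"
  shows "f \<midarrow>z\<rightarrow> 0"
proof -
  have s: "fls_subdegree (laurent_expansion f z) > 0"
    using assms zorder_eq_subdegree_laurent_expansion by simp
  have "f \<midarrow>z\<rightarrow> fls_nth (laurent_expansion f z) 0"
    by (rule has_laurent_expansion_imp_tendsto[OF meromorphic_on_imp_has_laurent_expansion[OF assms(1)]])
       (use s in simp_all)
  thus ?thesis using s by (simp add: fls_eq0_below_subdegree)
qed

lemma nicely_meromorphic_zero_iff_zorder_nonzero:
  assumes "f nicely_meromorphic_on UNIV" "\<exists>\<^sub>F w in at z. f w \<noteq> 0"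
  shows "f z = 0 \<longleftrightarrow> zorder f z \<noteq> 0"
proof -
  have m: "f meromorphic_on {z}"
    using assms(1) meromorphic_on_subset unfolding nicely_meromorphic_on_def by blast
  show ?thesis
  proof (cases "is_pole f z")
    case True
    thus ?thesis using is_pole_zero_at_nicely_mero[OF assms(1)] is_pole_iff_zorder_neg[OF m assms(2)] by simp
  next
    case False
    hence "zorder f z \<ge> 0" using is_pole_iff_zorder_neg[OF m assms(2)] by simp
    moreover have "zorder f z > 0 \<longleftrightarrow> f z = 0"
      by (rule zorder_pos_iff'[OF nicely_meromorphic_on_imp_analytic_at[OF assms(1) UNIV_I False] assms(2)])
    ultimately show ?thesis by auto
  qed
qed

lemma deriv_translate: "deriv (\<lambda>w. f (c + w)) z = deriv f (c + z)"
proof -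
  have "deriv (\<lambda>w. f (c + w)) z = deriv ((\<lambda>w. f (c + w)) \<circ> (\<lambda>x. z + x)) 0" by (rule deriv_shift_0)
  also have "(\<lambda>w. f (c + w)) \<circ> (\<lambda>x. z + x) = f \<circ> (\<lambda>x. (c + z) + x)" by (auto simp: add_ac)
  also have "deriv \<dots> 0 = deriv f (c + z)" by (rule deriv_shift_0[symmetric])
  finally show ?thesis .
qed

lemma tendsto_residue_simple_pole:
  assumes "f meromorphic_on {z}" "\<exists>\<^sub>F w in at z. f w \<noteq> 0" "zorder f z = -1"
  shows "((\<lambda>w. f w * (w - z)) \<longlongrightarrow> residue f z) (at z)"
proof -
  define F where "F = laurent_expansion f z"
  have Fe: "(\<lambda>w. f (z + w)) has_laurent_expansion F"
    unfolding F_def using meromorphic_on_imp_has_laurent_expansion[OF assms(1)] by simp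
  have F0: "F \<noteq> 0" and sF: "fls_subdegree F = -1"
    using zorder_eq_subdegree_laurent_expansion[OF assms(1,2)] assms(3) by (simp_all add: F_def)
  have "(\<lambda>w. f (z + w) * w powi 1) has_laurent_expansion fls_shift (-1) F"
    by (rule has_laurent_expansion_shift[OF Fe])
  hence "(\<lambda>w. (\<lambda>w. f w * (w - z)) (z + w)) has_laurent_expansion fls_shift (-1) F" by simp
  hence "((\<lambda>w. f w * (w - z)) \<longlongrightarrow> fls_nth (fls_shift (-1) F) 0) (at z)"
    by (rule has_laurent_expansion_imp_tendsto) (use F0 sF in simp)
  moreover have "residue f z = fls_residue F" by (rule has_laurent_expansion_residue[OF Fe])
  ultimately show ?thesis by simp
qed

lemma not_is_pole_if_tendsto_mult_0:
  assumes m: "f meromorphic_on {z}" and lim: "((\<lambda>w. f w * (w - z)) \<longlongrightarrow> 0) (at z)"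
  shows "\<not> is_pole f z"
proof
  assume pole: "is_pole f z"
  define F where "F = laurent_expansion f z"
  have Fe: "(\<lambda>w. f (z + w)) has_laurent_expansion F"
    unfolding F_def using meromorphic_on_imp_has_laurent_expansion[OF m] by simp
  have s: "fls_subdegree F < 0" using has_laurent_expansion_imp_is_pole_iff[OF Fe] pole by simp
  hence F0: "F \<noteq> 0" by auto
  have "(\<lambda>w. f (z + w) * w powi 1) has_laurent_expansion fls_shift (-1) F"
    by (rule has_laurent_expansion_shift[OF Fe])
  hence e: "(\<lambda>w. (\<lambda>w. f w * (w - z)) (z + w)) has_laurent_expansion fls_shift (-1) F" by simp
  have sQ: "fls_subdegree (fls_shift (-1) F) = fls_subdegree F + 1" using F0 by simp
  show False
  proof (cases "fls_subdegree F + 1 < 0")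
    case True
    hence "is_pole (\<lambda>w. f w * (w - z)) z" using has_laurent_expansion_imp_is_pole_iff[OF e] sQ by simp
    thus False using lim not_tendsto_and_filterlim_at_infinity[of "at z" "\<lambda>w. f w * (w - z)" 0]
      unfolding is_pole_def by auto
  next
    case False
    hence s1: "fls_subdegree F = -1" using s by simp
    have "((\<lambda>w. f w * (w - z)) \<longlongrightarrow> fls_nth (fls_shift (-1) F) 0) (at z)"
      by (rule has_laurent_expansion_imp_tendsto[OF e]) (use sQ s1 in simp)
    hence "fls_nth (fls_shift (-1) F) 0 = 0" using lim tendsto_unique[OF at_neq_bot] by blast
    moreover have "fls_nth F (fls_subdegree F) \<noteq> 0" using F0 by simp
    ultimately show False using s1 by simp
  qed
qed

lemma deriv_nonzero_if_zorder_1: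
  assumes m: "f meromorphic_on {z}" and fr: "\<exists>\<^sub>F w in at z. f w \<noteq> 0"
    and an: "f analytic_on {z}" and z1: "zorder f z = 1"
  shows "deriv f z \<noteq> 0"
proof -
  define F where "F = laurent_expansion f z"
  have Fe: "(\<lambda>w. f (z + w)) has_laurent_expansion F"
    unfolding F_def using meromorphic_on_imp_has_laurent_expansion[OF m] by simp
  have F0: "F \<noteq> 0" and s: "fls_subdegree F = 1"
    using zorder_eq_subdegree_laurent_expansion[OF m fr] z1 by (simp_all add: F_def)
  have "deriv (\<lambda>w. f (z + w)) = (\<lambda>w. deriv f (z + w))" by (rule ext) (rule deriv_translate)
  hence De: "(\<lambda>w. deriv f (z + w)) has_laurent_expansion fls_deriv F"
    using has_laurent_expansion_deriv[OF Fe] by simp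
  have "deriv f \<midarrow>z\<rightarrow> fls_nth (fls_deriv F) 0"
    by (rule has_laurent_expansion_imp_tendsto[OF De]) (use s fls_subdegree_deriv[of F] in simp)
  moreover have "deriv f \<midarrow>z\<rightarrow> deriv f z"
    using analytic_at_imp_isCont[OF analytic_deriv[OF an]] isContD by blast
  ultimately have "deriv f z = fls_nth (fls_deriv F) 0" using tendsto_unique[OF at_neq_bot] by blast
  also have "\<dots> = fls_nth F 1" by (simp add: fls_deriv_nth)
  finally show ?thesis using nth_fls_subdegree_nonzero[OF F0] s by simp
qed

text \<open>The residue of a logarithmic derivative is the order; so if \<open>g'/g - a h\<close> has no pole, the
  order of \<open>g\<close> is read off the residue of \<open>h\<close>.\<close>

lemma zorder_eq_residue_if_no_pole:
  assumes g: "g meromorphic_on {E}" "\<exists>\<^sub>F w in at E. g w \<noteq> 0" and h: "h meromorphic_on {E}"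
    and no_pole: "\<not> is_pole (\<lambda>w. deriv g w / g w - a * h w) E"
  shows "of_int (zorder g E) = a * residue h E"
proof -
  define G where "G = laurent_expansion g E"
  define H where "H = laurent_expansion h E"
  have Ge: "(\<lambda>w. g (E + w)) has_laurent_expansion G"
    unfolding G_def using meromorphic_on_imp_has_laurent_expansion[OF g(1)] by simp
  have He: "(\<lambda>w. h (E + w)) has_laurent_expansion H"
    unfolding H_def using meromorphic_on_imp_has_laurent_expansion[OF h] by simp
  have "deriv (\<lambda>w. g (E + w)) = (\<lambda>w. deriv g (E + w))" by (rule ext) (rule deriv_translate)
  hence "(\<lambda>w. deriv g (E + w)) has_laurent_expansion fls_deriv G"
    using has_laurent_expansion_deriv[OF Ge] by simp
  hence "(\<lambda>w. deriv g (E + w) / g (E + w) - a * h (E + w)) has_laurent_expansion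
           fls_deriv G / G - fls_const a * H"
    by (intro laurent_expansion_intros Ge He)
  hence "\<not> fls_subdegree (fls_deriv G / G - fls_const a * H) < 0"
    using has_laurent_expansion_imp_is_pole_iff no_pole by fastforce
  hence "fls_residue (fls_deriv G / G - fls_const a * H) = 0"
    by (intro fls_residue_power_series) simp
  moreover have "fls_residue (fls_deriv G / G) = of_int (fls_subdegree G)"
    using fls_residue_deriv_times_inverse_eq_subdegree(1)[of G] by (simp add: divide_inverse)
  moreover have "residue h E = fls_residue H" by (rule has_laurent_expansion_residue[OF He])
  moreover have "zorder g E = fls_subdegree G"
    unfolding G_def by (rule zorder_eq_subdegree_laurent_expansion(2)[OF g])
  ultimately show ?thesis by simp
qed

section \<open>The argument principle on a period parallelogram\<close>

lemma argument_principle_parallelogram: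
  fixes f :: "complex \<Rightarrow> complex"
  assumes pos: "Im (v * cnj u) > 0" and mero: "f nicely_meromorphic_on UNIV"
    and nz: "\<forall>\<^sub>\<approx>z. f z \<noteq> 0"
    and bd: "\<forall>p\<in>closed_cell z0 u v. f p = 0 \<longrightarrow> p \<in> open_cell z0 u v"
  shows "contour_integral (parallelogram_path z0 u v) (\<lambda>x. deriv f x / f x) =
           2 * pi * \<i> * (\<Sum>p\<in>{p\<in>open_cell z0 u v. f p = 0}. of_int (zorder f p))"
proof -
  have D: "Im (v * cnj u) \<noteq> 0" using pos by simp
  define S where "S = ball (0::complex) (norm z0 + norm u + norm v + 1)"
  define poles where "poles = {z. is_pole f z}"
  define pz where "pz = {w\<in>S. f w = 0 \<or> w \<in> poles}"
  have cell_S: "closed_cell z0 u v \<subseteq> S" using norm_le_closed_cell[OF D] unfolding S_def by fastforce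
  have pz: "pz = {w\<in>S. f w = 0}" \<comment> \<open>a nicely meromorphic function is \<open>0\<close> at its poles\<close>
    using is_pole_zero_at_nicely_mero[OF mero] unfolding pz_def poles_def by blast
  have fin_pz: "finite pz" unfolding pz by (rule finite_zeros_bounded[OF nz]) (simp add: S_def)
  have img: "path_image (parallelogram_path z0 u v) \<subseteq> closed_cell z0 u v - {z. f z = 0}"
    using path_image_parallelogram_path_subset[OF D] bd by blast
  have "contour_integral (parallelogram_path z0 u v) (\<lambda>x. deriv f x * 1 / f x) =
      2 * pi * \<i> * (\<Sum>p\<in>pz. winding_number (parallelogram_path z0 u v) p * 1 * zorder f p)"
    unfolding pz_def
  proof (rule argument_principle[where poles = poles])
    show "f holomorphic_on S - poles"
      using nicely_meromorphic_on_imp_analytic_at[OF mero UNIV_I]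
      by (intro analytic_imp_holomorphic analytic_on_analytic_at[THEN iffD2]) (auto simp: poles_def)
    show "\<forall>z. z \<notin> S \<longrightarrow> winding_number (parallelogram_path z0 u v) z = 0"
      using winding_number_parallelogram_path_outside[OF D] cell_S by blast
    show "finite {w \<in> S. f w = 0 \<or> w \<in> poles}" using fin_pz unfolding pz_def .
  qed (use img cell_S pz in \<open>auto simp: S_def pz_def poles_def valid_path_parallelogram_path
         pathfinish_parallelogram_path\<close>)
  also have "(\<Sum>p\<in>pz. winding_number (parallelogram_path z0 u v) p * 1 * zorder f p) =
      (\<Sum>p\<in>{p\<in>open_cell z0 u v. f p = 0}. of_int (zorder f p))"
  proof (rule sum.mono_neutral_cong_right[OF fin_pz])
    show "{p\<in>open_cell z0 u v. f p = 0} \<subseteq> pz"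
      using open_cell_subset_closed_cell[of z0 u v] cell_S unfolding pz by blast
    show "\<forall>p\<in>pz - {p\<in>open_cell z0 u v. f p = 0}. winding_number (parallelogram_path z0 u v) p * 1 * zorder f p = 0"
      using bd winding_number_parallelogram_path_outside[OF D] unfolding pz by auto
  qed (simp add: winding_number_parallelogram_path[OF pos])
  finally show ?thesis by simp
qed

text \<open>The logarithmic derivative is doubly periodic, so its integral over the boundary vanishes.\<close>

lemma sum_zorder_open_cell_oriented:
  fixes f :: "complex \<Rightarrow> complex"
  assumes pos: "Im (v * cnj u) > 0" and mero: "f nicely_meromorphic_on UNIV"
    and per: "\<forall>z. f (z + u) = f z \<and> f (z + v) = f z" and nz: "\<forall>\<^sub>\<approx>z. f z \<noteq> 0"
    and bd: "\<forall>p\<in>closed_cell z0 u v. f p = 0 \<longrightarrow> p \<in> open_cell z0 u v"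
  shows "(\<Sum>p\<in>{p\<in>open_cell z0 u v. f p = 0}. zorder f p) = 0"
proof -
  have D: "Im (v * cnj u) \<noteq> 0" using pos by simp
  have "contour_integral (parallelogram_path z0 u v) (\<lambda>x. deriv f x / f x) = 0"
  proof (rule contour_integral_parallelogram_path_periodic)
    have "open (- {z. f z = 0})"
      using sparse_in_UNIV_imp_closed nz unfolding eventually_cosparse by auto
    moreover have "f holomorphic_on - {z. f z = 0}"
      using is_pole_zero_at_nicely_mero[OF mero] nicely_meromorphic_on_imp_analytic_at[OF mero UNIV_I]
      by (intro analytic_imp_holomorphic analytic_on_analytic_at[THEN iffD2]) auto
    ultimately have "(\<lambda>x. deriv f x / f x) holomorphic_on - {z. f z = 0}"
      by (intro holomorphic_intros holomorphic_deriv) auto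
    moreover have "path_image (parallelogram_path z0 u v) \<subseteq> - {z. f z = 0}"
      using path_image_parallelogram_path_subset[OF D] bd by blast
    ultimately show "continuous_on (path_image (parallelogram_path z0 u v)) (\<lambda>x. deriv f x / f x)"
      by (meson holomorphic_on_imp_continuous_on holomorphic_on_subset)
    show "\<forall>z. deriv f (z + u) / f (z + u) = deriv f z / f z \<and> deriv f (z + v) / f (z + v) = deriv f z / f z"
      using per deriv_periodic[of f u] deriv_periodic[of f v] by simp
  qed
  hence "(\<Sum>p\<in>{p\<in>open_cell z0 u v. f p = 0}. of_int (zorder f p) :: complex) = 0"
    using argument_principle_parallelogram[OF pos mero nz bd] by simp
  thus ?thesis by (simp flip: of_int_sum)
qed

lemma sum_zorder_open_cell:
  fixes f :: "complex \<Rightarrow> complex"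
  assumes "Im (v * cnj u) \<noteq> 0" "f nicely_meromorphic_on UNIV"
    and "\<forall>z. f (z + u) = f z \<and> f (z + v) = f z" "\<forall>\<^sub>\<approx>z. f z \<noteq> 0"
    and "\<forall>p\<in>closed_cell z0 u v. f p = 0 \<longrightarrow> p \<in> open_cell z0 u v"
  shows "(\<Sum>p\<in>{p\<in>open_cell z0 u v. f p = 0}. zorder f p) = 0"
proof (cases "Im (v * cnj u) > 0")
  case True
  thus ?thesis using sum_zorder_open_cell_oriented[OF True assms(2-5)] by simp
next
  case False
  have "Im (u * cnj v) = - Im (v * cnj u)" by simp
  hence "Im (u * cnj v) > 0" using False assms(1) by linarith
  moreover have "\<forall>z. f (z + v) = f z \<and> f (z + u) = f z" using assms(3) by blast
  moreover have "\<forall>p\<in>closed_cell z0 v u. f p = 0 \<longrightarrow> p \<in> open_cell z0 v u"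
    using assms(5) by (simp only: cell_commute)
  ultimately have "(\<Sum>p\<in>{p\<in>open_cell z0 v u. f p = 0}. zorder f p) = 0"
    using sum_zorder_open_cell_oriented[of u v f z0] assms(2,4) by blast
  thus ?thesis by (simp add: cell_commute)
qed

lemma exists_real_avoiding_integer_shifts:
  assumes "finite F"
  obtains a :: real where "\<forall>q\<in>F. c q - a \<notin> \<int>"
proof -
  have "countable ((\<lambda>(q, k). c q - of_int k) ` (F \<times> (UNIV :: int set)))"
    using assms by (intro countable_image) (simp add: countable_finite)
  then obtain a where a: "a \<notin> (\<lambda>(q, k). c q - of_int k) ` (F \<times> (UNIV :: int set))"
    using uncountable_UNIV_real by (metis UNIV_eq_I)
  have "c q - a \<notin> \<int>" if "q \<in> F" for q
  proof
    assume "c q - a \<in> \<int>"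
    then obtain k where "c q - a = of_int k" by (elim Ints_cases)
    hence "a = c q - of_int k" by simp
    thus False using a that by auto
  qed
  thus ?thesis using that by blast
qed

text \<open>Non-integral coordinates relative to \<open>z0\<close> mean that no point of \<open>Z\<close> lies on the boundary of
  a lattice translate of the cell with corner \<open>z0\<close>.\<close>

lemma exists_base_point_avoiding:
  assumes D: "Im (v * cnj u) \<noteq> 0" and sparse: "Z sparse_in UNIV"
    and per: "\<forall>z\<in>Z. \<forall>l\<in>lattice u v. z + l \<in> Z"
  obtains z0 where "\<forall>p\<in>Z. coord1 u v (p - z0) \<notin> \<int> \<and> coord2 u v (p - z0) \<notin> \<int>"
proof -
  define F where "F = closed_cell 0 u v \<inter> Z"
  have "finite F"
    unfolding F_def by (rule sparse_in_compact_finite[OF sparse_in_subset[OF sparse]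
        compact_closed_cell[OF D]]) auto
  then obtain a b where a: "\<forall>q\<in>F. coord1 u v q - a \<notin> \<int>" and b: "\<forall>q\<in>F. coord2 u v q - b \<notin> \<int>"
    by (metis exists_real_avoiding_integer_shifts)
  define z0 where "z0 = of_real a * u + of_real b * v"
  have z0: "coord1 u v z0 = a" "coord2 u v z0 = b" unfolding z0_def by (simp_all add: coord_basis_comb[OF D])
  have "coord1 u v (p - z0) \<notin> \<int> \<and> coord2 u v (p - z0) \<notin> \<int>" if p: "p \<in> Z" for p
  proof -
    obtain l where l: "l \<in> lattice u v" "p - l \<in> closed_cell 0 u v"
      using lattice_translate_into_closed_cell[OF D] by blast
    have "p - l \<in> Z" using per p lattice_uminus[OF l(1)] by force
    hence "p - l \<in> F" using l(2) unfolding F_def by blast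
    hence "coord1 u v (p - l) - a \<notin> \<int>" "coord2 u v (p - l) - b \<notin> \<int>" using a b by blast+
    moreover have "coord1 u v (p - z0) = (coord1 u v (p - l) - a) + coord1 u v l"
      "coord2 u v (p - z0) = (coord2 u v (p - l) - b) + coord2 u v l"
      using coord_diff[of u v p z0] coord_diff[of u v p l] z0 by simp_all
    moreover have "coord1 u v l \<in> \<int>" "coord2 u v l \<in> \<int>" by (rule coord_lattice_Ints[OF D l(1)])+
    ultimately show ?thesis by (metis Ints_diff add_diff_cancel_right')
  qed
  thus ?thesis using that by blast
qed

section \<open>Weierstrass data of a periodic genus-one helicoid\<close>

lemma two_unit_weights:
  fixes a b :: "'a \<Rightarrow> int"
  assumes fin: "finite A" and a1: "\<forall>p\<in>A. a p \<ge> 1" and sa: "(\<Sum>p\<in>A. a p) = 2"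
    and ab: "\<forall>p\<in>A. b p = a p \<or> b p = - a p" and sb: "(\<Sum>p\<in>A. b p) = 0"
  obtains x y where "A = {x, y}" "x \<noteq> y" "a x = 1" "a y = 1" "b y = - b x"
proof -
  have "int (card A) = (\<Sum>p\<in>A. 1)" by simp
  also have "\<dots> \<le> (\<Sum>p\<in>A. a p)" using a1 by (intro sum_mono) auto
  finally have "card A \<le> 2" using sa by simp
  moreover have "card A \<noteq> 0" using fin sa by auto
  moreover have "card A \<noteq> 1"
  proof
    assume "card A = 1"
    then obtain x where "A = {x}" using card_1_singletonE by blast
    thus False using sa sb ab by auto
  qed
  ultimately have "card A = 2" by linarith
  then obtain x y where xy: "A = {x, y}" "x \<noteq> y" by (auto simp: card_2_iff)
  hence "a x + a y = 2" "b x + b y = 0" "a x \<ge> 1" "a y \<ge> 1" using sa sb a1 by simp_all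
  thus ?thesis using that xy by simp
qed

locale helicoid_data =
  fixes w1 w2 E1 E2 :: complex and g h :: "complex \<Rightarrow> complex"
  assumes gens: "lattice_gens w1 w2"
    and distinct: "E1 - E2 \<notin> lattice w1 w2"
    and g_mero: "g nicely_meromorphic_on UNIV"
    and g_per: "\<forall>z. g (z + w1) = g z \<and> g (z + w2) = g z"
    and h_mero: "h nicely_meromorphic_on UNIV"
    and h_per: "\<forall>z. h (z + w1) = h z \<and> h (z + w2) = h z"
    and g_pole: "is_pole g E2"
    and h_E1: "is_pole h E1 \<and> zorder h E1 = -1 \<and> residue h E1 = - \<i>"
    and h_E2: "is_pole h E2 \<and> zorder h E2 = -1 \<and> residue h E2 = \<i>"
    and h_hol: "\<forall>z. z \<notin> lifted_points w1 w2 {E1, E2} \<longrightarrow> \<not> is_pole h z"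
    and gh_hol: "\<forall>z. z \<notin> lifted_points w1 w2 {E1, E2} \<longrightarrow> \<not> is_pole (\<lambda>w. g w * h w) z"
    and ginvh_hol: "\<forall>z. z \<notin> lifted_points w1 w2 {E1, E2} \<longrightarrow> \<not> is_pole (\<lambda>w. h w / g w) z"
    and no_common_zero: "\<forall>z. z \<notin> lifted_points w1 w2 {E1, E2} \<longrightarrow>
           \<not> (((\<lambda>w. g w * h w) \<midarrow>z\<rightarrow> 0) \<and> ((\<lambda>w. h w / g w) \<midarrow>z\<rightarrow> 0))"
    and helicoid_end: "\<forall>E\<in>{E1, E2}. \<not> is_pole (\<lambda>w. deriv g w / g w - \<i> * h w) E"

begin

abbreviation L :: "complex set" where "L \<equiv> lattice w1 w2"

abbreviation P :: "complex set" where "P \<equiv> lifted_points w1 w2 {E1, E2}"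

text \<open>The involution is \<open>z \<mapsto> \<sigma> - z\<close>.\<close>

abbreviation \<sigma> :: complex where "\<sigma> \<equiv> E1 + E2"

lemma basis_nondegenerate: "Im (w2 * cnj w1) \<noteq> 0"
  using gens unfolding lattice_gens_def .

lemma g_meromorphic: "g meromorphic_on A" and h_meromorphic: "h meromorphic_on A"
  using g_mero h_mero meromorphic_on_subset unfolding nicely_meromorphic_on_def by blast+

lemma g_periodic: "l \<in> L \<Longrightarrow> g (z + l) = g z" and h_periodic: "l \<in> L \<Longrightarrow> h (z + l) = h z"
  by (rule periodic_lattice[OF g_per], assumption) (rule periodic_lattice[OF h_per], assumption)

lemma g_nonzero: "\<forall>\<^sub>\<approx>z. g z \<noteq> 0" and h_nonzero: "\<forall>\<^sub>\<approx>z. h z \<noteq> 0"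
  using nicely_meromorphic_nonzero_cosparse[OF g_mero g_pole]
    nicely_meromorphic_nonzero_cosparse[OF h_mero conjunct1[OF h_E1]] by simp_all

lemma g_frequently_nonzero: "\<exists>\<^sub>F w in at z. g w \<noteq> 0"
  and h_frequently_nonzero: "\<exists>\<^sub>F w in at z. h w \<noteq> 0"
  using g_nonzero h_nonzero by (simp_all add: eventually_cosparse_imp_frequently_at)

lemma zorder_g_E1: "zorder g E1 = 1" and zorder_g_E2: "zorder g E2 = -1"
proof -
  have "of_int (zorder g E) = \<i> * residue h E" if "E \<in> {E1, E2}" for E
    using zorder_eq_residue_if_no_pole[OF g_meromorphic g_frequently_nonzero h_meromorphic]
      helicoid_end that by blast
  hence "of_int (zorder g E1) = (1 :: complex)" "of_int (zorder g E2) = (-1 :: complex)"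
    using h_E1 h_E2 by auto
  thus "zorder g E1 = 1" "zorder g E2 = -1" by (metis of_int_1 of_int_eq_iff of_int_minus)+
qed

lemma h_analytic_off_ends: "z \<notin> P \<Longrightarrow> h analytic_on {z}"
  using h_hol nicely_meromorphic_on_imp_analytic_at[OF h_mero UNIV_I] by blast

lemma reflect_mem_P_iff: "\<sigma> - z \<in> P \<longleftrightarrow> z \<in> P"
proof -
  have "\<sigma> - z - E1 = - (z - E2)" "\<sigma> - z - E2 = - (z - E1)" by simp_all
  thus ?thesis unfolding mem_lifted_points_iff using lattice_uminus by fastforce
qed

subsection \<open>The symmetry of \<open>h\<close>\<close>

lemma h_reflect_diff_periodic: "l \<in> L \<Longrightarrow> h (z + l) - h (\<sigma> - (z + l)) = h z - h (\<sigma> - z)"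
proof -
  assume l: "l \<in> L"
  have "\<sigma> - (z + l) = (\<sigma> - z) + (- l)" by simp
  thus ?thesis using h_periodic[OF l] h_periodic[OF lattice_uminus[OF l]] by metis
qed

text \<open>At \<open>E1\<close> and \<open>E2\<close> the simple poles of \<open>h\<close> and of \<open>h(\<sigma> - \<cdot>)\<close> have opposite residues.\<close>

lemma h_reflect_diff_no_pole_at_end:
  assumes "E \<in> {E1, E2}"
  shows "\<not> is_pole (\<lambda>z. h z - h (\<sigma> - z)) E"
proof (rule not_is_pole_if_tendsto_mult_0)
  show "(\<lambda>z. h z - h (\<sigma> - z)) meromorphic_on {E}"
    by (intro meromorphic_intros h_meromorphic meromorphic_on_compose[OF h_meromorphic])
       (auto intro!: analytic_intros)
  define E' where "E' = \<sigma> - E"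
  have E': "E' \<in> {E1, E2}" "residue h E + residue h E' = 0" using assms h_E1 h_E2 unfolding E'_def by auto
  have simple: "zorder h X = -1" if "X \<in> {E1, E2}" for X using that h_E1 h_E2 by auto
  have "((\<lambda>w. h w * (w - E)) \<longlongrightarrow> residue h E) (at E)"
    by (rule tendsto_residue_simple_pole[OF h_meromorphic h_frequently_nonzero simple[OF assms]])
  moreover have "((\<lambda>w. h (\<sigma> - w) * ((\<sigma> - w) - E')) \<longlongrightarrow> residue h E') (at E)"
    using tendsto_residue_simple_pole[OF h_meromorphic h_frequently_nonzero simple[OF E'(1)]]
    unfolding E'_def by (rule tendsto_reflect)
  ultimately have "((\<lambda>w. h w * (w - E) + h (\<sigma> - w) * ((\<sigma> - w) - E')) \<longlongrightarrow> 0) (at E)"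
    using tendsto_add E'(2) by fastforce
  moreover have "h w * (w - E) + h (\<sigma> - w) * ((\<sigma> - w) - E') = (h w - h (\<sigma> - w)) * (w - E)" for w
    by (simp add: E'_def algebra_simps)
  ultimately show "((\<lambda>w. (h w - h (\<sigma> - w)) * (w - E)) \<longlongrightarrow> 0) (at E)" by simp
qed

lemma h_reflect_diff_no_pole: "\<not> is_pole (\<lambda>z. h z - h (\<sigma> - z)) z"
proof (cases "z \<in> P")
  case False
  hence "h analytic_on {z}" "h analytic_on {\<sigma> - z}" using h_analytic_off_ends reflect_mem_P_iff by auto
  moreover have "h \<circ> (\<lambda>w. \<sigma> - w) analytic_on {z}"
    by (rule analytic_on_compose_gen[of _ _ _ "{\<sigma> - z}"]) (use calculation in \<open>auto intro!: analytic_intros\<close>)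
  ultimately have "(\<lambda>z. h z - h (\<sigma> - z)) analytic_on {z}" by (auto intro!: analytic_intros simp: o_def)
  thus ?thesis by (rule analytic_at_imp_no_pole)
next
  case True
  then obtain E where E: "E \<in> {E1, E2}" "z - E \<in> L" unfolding mem_lifted_points_iff by blast
  have "\<forall>w. h (w + (z - E)) - h (\<sigma> - (w + (z - E))) = h w - h (\<sigma> - w)"
    using h_reflect_diff_periodic[OF E(2)] by blast
  from is_pole_periodic[OF this, of E] show ?thesis
    using h_reflect_diff_no_pole_at_end[OF E(1)] by simp
qed

lemma h_reflect: "\<forall>\<^sub>\<approx>z. h (\<sigma> - z) = h z"
proof -
  have per: "\<forall>z. h (z + w1) - h (\<sigma> - (z + w1)) = h z - h (\<sigma> - z) \<and>
      h (z + w2) - h (\<sigma> - (z + w2)) = h z - h (\<sigma> - z)"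
    using h_reflect_diff_periodic lattice_generators by blast
  have "(\<lambda>z. h z - h (\<sigma> - z)) meromorphic_on UNIV"
    by (intro meromorphic_intros h_meromorphic meromorphic_on_compose[OF h_meromorphic])
       (auto intro!: analytic_intros)
  then obtain C where C: "\<forall>\<^sub>\<approx>z. h z - h (\<sigma> - z) = C"
    using doubly_periodic_meromorphic_const[OF basis_nondegenerate _ per] h_reflect_diff_no_pole by blast
  have "\<forall>\<^sub>\<approx>z. h z - h (\<sigma> - z) = C \<and> h (\<sigma> - z) - h (\<sigma> - (\<sigma> - z)) = C"
    using C eventually_cosparse_reflect[OF C] by (rule eventually_conj)
  hence "\<forall>\<^sub>\<approx>z. C = 0 \<and> h z - h (\<sigma> - z) = C" by eventually_elim auto
  then obtain z where "C = 0" using eventually_happens'[of "cosparse UNIV"] by force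
  with C show ?thesis by (auto elim!: eventually_mono)
qed

subsection \<open>The divisors of \<open>g\<close> and \<open>h\<close>\<close>

text \<open>Off the ends, \<open>g h\<close> and \<open>h / g\<close> are holomorphic without common zeros, so \<open>|ord g| = ord h\<close>.\<close>

lemma orders_off_ends:
  assumes "z \<notin> P"
  shows "zorder h z \<ge> 0" "zorder g z = zorder h z \<or> zorder g z = - zorder h z"
proof -
  have nz: "\<forall>\<^sub>\<approx>z. g z * h z \<noteq> 0 \<and> h z / g z \<noteq> 0" using g_nonzero h_nonzero by eventually_elim auto
  have fr: "\<exists>\<^sub>F w in at z. g w * h w \<noteq> 0" "\<exists>\<^sub>F w in at z. h w / g w \<noteq> 0"
    using nz by (auto intro!: eventually_cosparse_imp_frequently_at elim: eventually_mono)
  have m: "(\<lambda>w. g w * h w) meromorphic_on {z}" "(\<lambda>w. h w / g w) meromorphic_on {z}"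
    by (auto intro!: meromorphic_intros g_meromorphic h_meromorphic)
  have "zorder (\<lambda>w. g w * h w) z = zorder g z + zorder h z"
    by (rule zorder_mult[OF g_meromorphic g_frequently_nonzero h_meromorphic h_frequently_nonzero])
  moreover have "zorder (\<lambda>w. h w / g w) z = zorder h z - zorder g z"
    by (rule zorder_divide[OF h_meromorphic h_frequently_nonzero g_meromorphic g_frequently_nonzero])
  moreover have "zorder (\<lambda>w. g w * h w) z \<ge> 0" "zorder (\<lambda>w. h w / g w) z \<ge> 0"
    using is_pole_iff_zorder_neg[OF m(1) fr(1)] is_pole_iff_zorder_neg[OF m(2) fr(2)]
      gh_hol ginvh_hol assms by auto
  moreover have "\<not> (zorder (\<lambda>w. g w * h w) z > 0 \<and> zorder (\<lambda>w. h w / g w) z > 0)"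
    using zorder_pos_imp_tendsto_0[OF m(1) fr(1)] zorder_pos_imp_tendsto_0[OF m(2) fr(2)]
      no_common_zero assms by blast
  moreover have "zorder h z \<ge> 0"
    using is_pole_iff_zorder_neg[OF h_meromorphic h_frequently_nonzero] h_hol assms by auto
  ultimately show "zorder h z \<ge> 0" "zorder g z = zorder h z \<or> zorder g z = - zorder h z" by linarith+
qed

lemma g_zero_iff: "g z = 0 \<longleftrightarrow> zorder g z \<noteq> 0"
  and h_zero_iff: "h z = 0 \<longleftrightarrow> zorder h z \<noteq> 0"
  using nicely_meromorphic_zero_iff_zorder_nonzero[OF g_mero g_frequently_nonzero]
    nicely_meromorphic_zero_iff_zorder_nonzero[OF h_mero h_frequently_nonzero] by blast+

lemma zorder_g_congruent: "p - z \<in> L \<Longrightarrow> zorder g p = zorder g z"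
  and zorder_h_congruent: "p - z \<in> L \<Longrightarrow> zorder h p = zorder h z"
  using zorder_periodic[of g "p - z" z] zorder_periodic[of h "p - z" z] g_periodic h_periodic by auto

text \<open>Since \<open>g\<close> and \<open>h\<close> are nicely meromorphic, this set contains their poles as well as their zeros.\<close>

definition zero_set :: "complex set" where
  "zero_set = {z. g z = 0 \<or> h z = 0}"

lemma zero_set_periodic: "z \<in> zero_set \<Longrightarrow> l \<in> L \<Longrightarrow> z + l \<in> zero_set"
  unfolding zero_set_def using g_periodic h_periodic by auto

definition base :: complex where
  "base = (SOME z0. \<forall>p\<in>zero_set. coord1 w1 w2 (p - z0) \<notin> \<int> \<and> coord2 w1 w2 (p - z0) \<notin> \<int>)"

abbreviation cell :: "complex set" where "cell \<equiv> open_cell base w1 w2"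

lemma zero_set_off_cell_boundary:
  assumes "p \<in> zero_set" "p \<in> closed_cell base w1 w2"
  shows "p \<in> cell"
proof -
  have "zero_set sparse_in UNIV"
    using eventually_conj[OF g_nonzero h_nonzero] unfolding eventually_cosparse zero_set_def by simp
  then obtain z0 where "\<forall>p\<in>zero_set. coord1 w1 w2 (p - z0) \<notin> \<int> \<and> coord2 w1 w2 (p - z0) \<notin> \<int>"
    using exists_base_point_avoiding[OF basis_nondegenerate] zero_set_periodic by blast
  hence "\<forall>p\<in>zero_set. coord1 w1 w2 (p - base) \<notin> \<int> \<and> coord2 w1 w2 (p - base) \<notin> \<int>"
    unfolding base_def by (rule someI)
  hence "coord1 w1 w2 (p - base) \<notin> {0, 1}" "coord2 w1 w2 (p - base) \<notin> {0, 1}"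
    using assms(1) Ints_0 Ints_1 by auto
  thus ?thesis using assms(2) unfolding closed_cell_def open_cell_def by auto
qed

definition rep :: "complex \<Rightarrow> complex" where
  "rep z = (SOME p. p \<in> cell \<and> p - z \<in> L)"

lemma rep:
  assumes "z \<in> zero_set"
  shows "rep z \<in> cell" "rep z - z \<in> L"
proof -
  obtain l where l: "l \<in> L" "z - l \<in> closed_cell base w1 w2"
    using lattice_translate_into_closed_cell[OF basis_nondegenerate] by blast
  have "z - l \<in> cell" "z - l - z \<in> L"
    using zero_set_off_cell_boundary zero_set_periodic[OF assms lattice_uminus[OF l(1)]] l lattice_uminus
    by simp_all
  hence "\<exists>p. p \<in> cell \<and> p - z \<in> L" by blast
  hence "rep z \<in> cell \<and> rep z - z \<in> L" unfolding rep_def by (rule someI_ex)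
  thus "rep z \<in> cell" "rep z - z \<in> L" by simp_all
qed

lemma sum_zorder_g_cell: "finite {p\<in>cell. g p = 0}" "(\<Sum>p\<in>{p\<in>cell. g p = 0}. zorder g p) = 0"
  and sum_zorder_h_cell: "finite {p\<in>cell. h p = 0}" "(\<Sum>p\<in>{p\<in>cell. h p = 0}. zorder h p) = 0"
proof -
  have "bounded cell"
    by (rule bounded_subset[OF compact_imp_bounded[OF compact_closed_cell[OF basis_nondegenerate]]
          open_cell_subset_closed_cell])
  thus "finite {p\<in>cell. g p = 0}" "finite {p\<in>cell. h p = 0}"
    by (rule finite_zeros_bounded[OF g_nonzero], rule finite_zeros_bounded[OF h_nonzero])
  have "\<forall>p\<in>closed_cell base w1 w2. g p = 0 \<longrightarrow> p \<in> cell"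
    "\<forall>p\<in>closed_cell base w1 w2. h p = 0 \<longrightarrow> p \<in> cell"
    using zero_set_off_cell_boundary unfolding zero_set_def by blast+
  thus "(\<Sum>p\<in>{p\<in>cell. g p = 0}. zorder g p) = 0" "(\<Sum>p\<in>{p\<in>cell. h p = 0}. zorder h p) = 0"
    using sum_zorder_open_cell[OF basis_nondegenerate g_mero g_per g_nonzero]
      sum_zorder_open_cell[OF basis_nondegenerate h_mero h_per h_nonzero] by blast+
qed

definition e1 :: complex where "e1 = rep E1"

definition e2 :: complex where "e2 = rep E2"

lemma ends_in_zero_set: "E1 \<in> zero_set" "E2 \<in> zero_set"
  using is_pole_zero_at_nicely_mero[OF h_mero] h_E1 h_E2 unfolding zero_set_def by auto

lemma e1: "e1 \<in> cell" "e1 - E1 \<in> L" and e2: "e2 \<in> cell" "e2 - E2 \<in> L"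
  unfolding e1_def e2_def using rep ends_in_zero_set by blast+

lemma e1_neq_e2: "e1 \<noteq> e2"
proof
  assume "e1 = e2"
  hence "E1 - E2 = (e2 - E2) - (e1 - E1)" by simp
  thus False using lattice_diff[OF e2(2) e1(2)] distinct by simp
qed

lemma orders_at_e: "zorder h e1 = -1" "zorder h e2 = -1" "zorder g e1 = 1" "zorder g e2 = -1"
  using zorder_h_congruent[OF e1(2)] zorder_h_congruent[OF e2(2)] zorder_g_congruent[OF e1(2)]
    zorder_g_congruent[OF e2(2)] h_E1 h_E2 zorder_g_E1 zorder_g_E2 by auto

lemma cell_off_ends:
  assumes "p \<in> cell" "p \<noteq> e1" "p \<noteq> e2"
  shows "p \<notin> P"
proof
  assume "p \<in> P"
  then obtain E e where "E \<in> {E1, E2}" "p - E \<in> L" "e \<in> {e1, e2}" "e - E \<in> L" "e \<in> cell"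
    unfolding mem_lifted_points_iff using e1 e2 by blast
  hence "p = e" using open_cell_lattice_diff_imp_eq[OF basis_nondegenerate assms(1)]
      lattice_diff[of "p - E" w1 w2 "e - E"] by simp
  thus False using \<open>e \<in> {e1, e2}\<close> assms by auto
qed

definition other_zeros_h :: "complex set" where
  "other_zeros_h = {p\<in>cell. h p = 0} - {e1, e2}"

lemma h_zero_if_g_zero_off_ends: "z \<notin> P \<Longrightarrow> g z = 0 \<Longrightarrow> h z = 0"
  using orders_off_ends(2) g_zero_iff h_zero_iff by force

lemma finite_other_zeros_h: "finite other_zeros_h"
  unfolding other_zeros_h_def using sum_zorder_h_cell(1) by simp

lemma zorder_other_zeros_h:
  assumes "p \<in> other_zeros_h"
  shows "zorder h p \<ge> 1" "zorder g p = zorder h p \<or> zorder g p = - zorder h p"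
proof -
  have off: "p \<notin> P" using assms cell_off_ends unfolding other_zeros_h_def by blast
  have "zorder h p \<noteq> 0" using assms h_zero_iff unfolding other_zeros_h_def by blast
  thus "zorder h p \<ge> 1" using orders_off_ends(1)[OF off] by linarith
  show "zorder g p = zorder h p \<or> zorder g p = - zorder h p" by (rule orders_off_ends(2)[OF off])
qed

text \<open>The two simple poles of \<open>h\<close> in the cell are balanced by zeros of total order two, and the
  zero and the pole of \<open>g\<close> at the ends cancel as well.\<close>

lemma sum_zorder_other_zeros_h:
  "(\<Sum>p\<in>other_zeros_h. zorder h p) = 2" "(\<Sum>p\<in>other_zeros_h. zorder g p) = 0"
proof -
  have e_zero: "h e1 = 0" "h e2 = 0" "g e1 = 0" "g e2 = 0"
    using orders_at_e g_zero_iff h_zero_iff by auto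
  have "(\<Sum>p\<in>{p\<in>cell. h p = 0}. zorder h p) = (\<Sum>p\<in>other_zeros_h. zorder h p) + (\<Sum>p\<in>{e1, e2}. zorder h p)"
    unfolding other_zeros_h_def using e1 e2 e_zero sum_zorder_h_cell(1) by (intro sum.subset_diff) auto
  thus "(\<Sum>p\<in>other_zeros_h. zorder h p) = 2" using sum_zorder_h_cell(2) orders_at_e e1_neq_e2 by simp
  define G where "G = {p\<in>cell. g p = 0} - {e1, e2}"
  have "(\<Sum>p\<in>{p\<in>cell. g p = 0}. zorder g p) = (\<Sum>p\<in>G. zorder g p) + (\<Sum>p\<in>{e1, e2}. zorder g p)"
    unfolding G_def using e1 e2 e_zero sum_zorder_g_cell(1) by (intro sum.subset_diff) auto
  hence "(\<Sum>p\<in>G. zorder g p) = 0" using sum_zorder_g_cell(2) orders_at_e e1_neq_e2 by simp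
  moreover have "(\<Sum>p\<in>other_zeros_h. zorder g p) = (\<Sum>p\<in>G. zorder g p)"
  proof (rule sum.mono_neutral_right[OF finite_other_zeros_h])
    show "G \<subseteq> other_zeros_h"
      using cell_off_ends h_zero_if_g_zero_off_ends unfolding G_def other_zeros_h_def by blast
    show "\<forall>p\<in>other_zeros_h - G. zorder g p = 0"
      using g_zero_iff unfolding G_def other_zeros_h_def by blast
  qed
  ultimately show "(\<Sum>p\<in>other_zeros_h. zorder g p) = 0" by simp
qed

lemma two_other_zeros_h:
  obtains a b where "other_zeros_h = {a, b}" "a \<noteq> b" "zorder h a = 1" "zorder h b = 1"
    "zorder g b = - zorder g a"
  using two_unit_weights[OF finite_other_zeros_h _ sum_zorder_other_zeros_h(1) _ sum_zorder_other_zeros_h(2)]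
    zorder_other_zeros_h by blast

lemma zorder_h_reflect: "zorder h (\<sigma> - z) = zorder h z"
proof -
  have "zorder h (\<sigma> - z) = zorder (\<lambda>w. h (\<sigma> - w)) z" by (rule zorder_reflect[OF h_meromorphic, symmetric])
  also have "\<dots> = zorder h z"
    using eventually_cosparse_imp_eventually_at[OF h_reflect, of z UNIV] by (intro zorder_cong) simp_all
  finally show ?thesis .
qed

lemma reflect_congruent: "p - z \<in> L \<Longrightarrow> (\<sigma> - p) - (\<sigma> - z) \<in> L"
proof -
  assume "p - z \<in> L"
  hence "- (p - z) \<in> L" by (rule lattice_uminus)
  moreover have "(\<sigma> - p) - (\<sigma> - z) = - (p - z)" by simp
  ultimately show ?thesis by (simp only:)
qed

lemma deriv_h_eq_0_if_self_reflect:
  assumes off: "x \<notin> P" and self: "(\<sigma> - x) - x \<in> L"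
  shows "deriv h x = 0"
proof -
  have per: "\<forall>w. h (w + (\<sigma> - x - x)) = h w" using h_periodic[OF self] by blast
  have "\<sigma> - x \<notin> P" using off reflect_mem_P_iff by simp
  hence ac: "h analytic_on {\<sigma> - x}" by (rule h_analytic_off_ends)
  have "h (\<sigma> - x) = h x" using per[rule_format, of x] by simp
  hence "eventually (\<lambda>w. h (\<sigma> - w) = h w) (nhds x)"
    using eventually_cosparse_imp_eventually_at[OF h_reflect, of x UNIV]
    by (simp add: eventually_nhds_conv_at)
  hence "deriv h x = deriv (\<lambda>w. h (\<sigma> - w)) x" by (rule deriv_cong_ev[symmetric]) simp
  also have "\<dots> = deriv h (\<sigma> - x) * (-1)"
  proof (rule DERIV_imp_deriv, rule DERIV_chain2[of h])
    show "(h has_field_derivative deriv h (\<sigma> - x)) (at (\<sigma> - x))"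
      using analytic_on_imp_differentiable_at[OF ac] DERIV_deriv_iff_field_differentiable by blast
  qed (auto intro!: derivative_eq_intros)
  also have "deriv h (\<sigma> - x) = deriv h x" using deriv_periodic[OF per, of x] by simp
  finally show ?thesis by simp
qed

lemma reflect_other_zero:
  assumes x: "x \<in> other_zeros_h" and x1: "zorder h x = 1"
  obtains y where "y \<in> other_zeros_h" "y \<noteq> x" "y - (\<sigma> - x) \<in> L"
proof -
  have off: "x \<notin> P" using x cell_off_ends unfolding other_zeros_h_def by blast
  have zc: "zorder h (\<sigma> - x) = 1" using zorder_h_reflect x1 by simp
  hence "\<sigma> - x \<in> zero_set" using h_zero_iff unfolding zero_set_def by simp
  hence y: "rep (\<sigma> - x) \<in> cell" "rep (\<sigma> - x) - (\<sigma> - x) \<in> L" by (rule rep)+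
  define y where "y = rep (\<sigma> - x)"
  have "zorder h y = 1" using zorder_h_congruent[OF y(2)] zc unfolding y_def by simp
  hence "y \<noteq> e1" "y \<noteq> e2" "h y = 0" using orders_at_e h_zero_iff by auto
  hence y_other: "y \<in> other_zeros_h" using y(1) unfolding other_zeros_h_def y_def by simp
  have "y \<noteq> x"
  proof
    assume "y = x"
    hence "x - (\<sigma> - x) \<in> L" using y(2) unfolding y_def by simp
    hence "(\<sigma> - x) - x \<in> L" by (rule lattice_diff_commute[THEN iffD1])
    hence "deriv h x = 0" by (rule deriv_h_eq_0_if_self_reflect[OF off])
    moreover have "deriv h x \<noteq> 0"
      by (rule deriv_nonzero_if_zorder_1[OF h_meromorphic h_frequently_nonzero h_analytic_off_ends[OF off] x1])
    ultimately show False by simp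
  qed
  thus ?thesis using that y_other y(2) unfolding y_def by blast
qed

text \<open>The reflection exchanges the two ends and the two remaining zeros of \<open>h\<close> in the cell; at
  each pair \<open>g\<close> has opposite orders.\<close>

lemma zorder_g_reflect_cell:
  assumes p: "p \<in> cell" "g p = 0"
  shows "zorder g p + zorder g (\<sigma> - p) = 0"
proof -
  obtain a b where ab: "other_zeros_h = {a, b}" "a \<noteq> b" "zorder h a = 1" "zorder h b = 1"
    "zorder g b = - zorder g a" by (rule two_other_zeros_h)
  obtain y where y: "y \<in> other_zeros_h" "y \<noteq> a" "y - (\<sigma> - a) \<in> L"
    using reflect_other_zero[of a] ab by auto
  have "y = b" using y ab by blast
  hence ga: "zorder g (\<sigma> - a) = - zorder g a" using zorder_g_congruent[OF y(3)] ab(5) by simp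
  obtain y' where y': "y' \<in> other_zeros_h" "y' \<noteq> b" "y' - (\<sigma> - b) \<in> L"
    using reflect_other_zero[of b] ab by auto
  have "y' = a" using y' ab by blast
  hence gb: "zorder g (\<sigma> - b) = - zorder g b" using zorder_g_congruent[OF y'(3)] ab(5) by simp
  have ge: "zorder g (\<sigma> - e1) = -1" "zorder g (\<sigma> - e2) = 1"
    using zorder_g_congruent[OF reflect_congruent[OF e1(2)]]
      zorder_g_congruent[OF reflect_congruent[OF e2(2)]] zorder_g_E1 zorder_g_E2 by simp_all
  have "p \<in> {e1, e2} \<or> p \<in> other_zeros_h"
    using p cell_off_ends h_zero_if_g_zero_off_ends unfolding other_zeros_h_def by blast
  thus ?thesis
  proof (elim disjE insertE emptyE)
    assume "p \<in> other_zeros_h"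
    hence "p = a \<or> p = b" using ab(1) by simp
    thus ?thesis using ga gb ab(5) by (elim disjE) simp_all
  qed (use orders_at_e ge in simp_all)
qed

lemma zorder_g_reflect: "zorder g z + zorder g (\<sigma> - z) = 0"
proof -
  have at_zero: "zorder g z + zorder g (\<sigma> - z) = 0" if "g z = 0" for z
  proof -
    have "z \<in> zero_set" using that unfolding zero_set_def by simp
    hence p: "rep z \<in> cell" "rep z - z \<in> L" by (rule rep)+
    have "g (rep z) = 0" using g_periodic[OF p(2), of z] that by simp
    hence "zorder g (rep z) + zorder g (\<sigma> - rep z) = 0" by (rule zorder_g_reflect_cell[OF p(1)])
    thus ?thesis
      using zorder_g_congruent[OF p(2)] zorder_g_congruent[OF reflect_congruent[OF p(2)]] by simp
  qed
  show ?thesis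
  proof (cases "g z = 0 \<or> g (\<sigma> - z) = 0")
    case True
    thus ?thesis using at_zero at_zero[of "\<sigma> - z"] by (auto simp: add.commute)
  next
    case False
    thus ?thesis using g_zero_iff by auto
  qed
qed

subsection \<open>The symmetry of \<open>g\<close>\<close>

lemma g_reflect_product_const:
  obtains C where "\<forall>\<^sub>\<approx>z. g z * g (\<sigma> - z) = C"
proof -
  have gr_mero: "(\<lambda>w. g (\<sigma> - w)) meromorphic_on A" for A
    by (rule meromorphic_on_compose[OF g_meromorphic]) (auto intro!: analytic_intros)
  have mero: "(\<lambda>w. g w * g (\<sigma> - w)) meromorphic_on A" for A
    by (intro meromorphic_intros g_meromorphic gr_mero)
  have nz: "\<forall>\<^sub>\<approx>z. g z * g (\<sigma> - z) \<noteq> 0"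
    using g_nonzero eventually_cosparse_reflect[OF g_nonzero] by eventually_elim simp
  have gr_fr: "\<exists>\<^sub>F w in at z. g (\<sigma> - w) \<noteq> 0" for z
    by (rule eventually_cosparse_imp_frequently_at[OF eventually_cosparse_reflect[OF g_nonzero]])
  have "zorder (\<lambda>w. g w * g (\<sigma> - w)) z = zorder g z + zorder (\<lambda>w. g (\<sigma> - w)) z" for z
    by (rule zorder_mult[OF g_meromorphic g_frequently_nonzero gr_mero gr_fr])
  hence "zorder (\<lambda>w. g w * g (\<sigma> - w)) z = 0" for z
    using zorder_reflect[OF g_meromorphic] zorder_g_reflect by simp
  hence no_pole: "\<forall>z. \<not> is_pole (\<lambda>w. g w * g (\<sigma> - w)) z"
    using is_pole_iff_zorder_neg[OF mero eventually_cosparse_imp_frequently_at[OF nz]] by simp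
  have "g (\<sigma> - (z + l)) = g (\<sigma> - z)" if "l \<in> L" for z l
  proof -
    have "\<sigma> - (z + l) = (\<sigma> - z) + (- l)" by simp
    thus ?thesis using g_periodic[OF lattice_uminus[OF that]] by (simp only:)
  qed
  hence "\<forall>z. g (z + w1) * g (\<sigma> - (z + w1)) = g z * g (\<sigma> - z) \<and>
      g (z + w2) * g (\<sigma> - (z + w2)) = g z * g (\<sigma> - z)"
    using g_periodic lattice_generators by simp
  thus ?thesis using doubly_periodic_meromorphic_const[OF basis_nondegenerate mero _ no_pole] that by blast
qed

lemma g_has_deriv_at_nonzero:
  assumes "g w \<noteq> 0"
  shows "(g has_field_derivative deriv g w) (at w)"
proof -
  have "g analytic_on {w}"
    using assms is_pole_zero_at_nicely_mero[OF g_mero] nicely_meromorphic_on_imp_analytic_at[OF g_mero]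
    by blast
  thus ?thesis using analytic_on_imp_differentiable_at DERIV_deriv_iff_field_differentiable by blast
qed

lemma g_logderiv_reflect: "\<forall>\<^sub>\<approx>z. deriv g (\<sigma> - z) / g (\<sigma> - z) = deriv g z / g z"
proof -
  obtain C where C: "\<forall>\<^sub>\<approx>z. g z * g (\<sigma> - z) = C" by (rule g_reflect_product_const)
  have "\<forall>\<^sub>\<approx>z. g z \<noteq> 0 \<and> g (\<sigma> - z) \<noteq> 0"
    using g_nonzero eventually_cosparse_reflect[OF g_nonzero] by (rule eventually_conj)
  thus ?thesis
  proof eventually_elim
    case (elim z)
    have "((\<lambda>w. g (\<sigma> - w)) has_field_derivative deriv g (\<sigma> - z) * (-1)) (at z)"
      by (rule DERIV_chain2[of g _ "\<lambda>w. \<sigma> - w", OF g_has_deriv_at_nonzero[OF conjunct2[OF elim]]])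
         (auto intro!: derivative_eq_intros)
    hence prod: "((\<lambda>w. g w * g (\<sigma> - w)) has_field_derivative
        deriv g z * g (\<sigma> - z) + deriv g (\<sigma> - z) * (-1) * g z) (at z)"
      using DERIV_mult[OF g_has_deriv_at_nonzero[OF conjunct1[OF elim]]] by blast
    have "deriv (\<lambda>w. g w * g (\<sigma> - w)) z = 0"
      using prod field_differentiable_def by (intro deriv_eq_0_if_eventually_cosparse_const[OF C]) blast
    hence "deriv g z * g (\<sigma> - z) = deriv g (\<sigma> - z) * g z" using DERIV_imp_deriv[OF prod] by simp
    thus ?case using elim by (simp add: field_simps)
  qed
qed

lemma helicoid_involution:
  "\<exists>I. I holomorphic_on UNIV
     \<and> (\<forall>z w. I z - I w \<in> L \<longleftrightarrow> z - w \<in> L)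
     \<and> (\<forall>z. I (I z) - z \<in> L)
     \<and> \<not> (\<forall>z. I z - z \<in> L)
     \<and> I E1 - E2 \<in> L
     \<and> (\<forall>\<^sub>\<approx>z. h (I z) * deriv I z = - h z)
     \<and> (\<forall>\<^sub>\<approx>z. deriv g (I z) / g (I z) * deriv I z = - (deriv g z / g z))"
proof (intro exI[of _ "\<lambda>z. \<sigma> - z"] conjI allI)
  have dI: "deriv (\<lambda>z. \<sigma> - z) z = -1" for z by (rule DERIV_imp_deriv) (auto intro!: derivative_eq_intros)
  show "(\<lambda>z. \<sigma> - z) holomorphic_on UNIV" by (intro holomorphic_intros)
  show "(\<sigma> - z) - (\<sigma> - w) \<in> L \<longleftrightarrow> z - w \<in> L" for z w using lattice_diff_commute[of w z] by simp
  show "\<sigma> - (\<sigma> - z) - z \<in> L" "\<sigma> - E1 - E2 \<in> L" for z by simp_all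
  show "\<not> (\<forall>z. \<sigma> - z - z \<in> L)"
  proof
    assume "\<forall>z. \<sigma> - z - z \<in> L"
    hence "\<sigma> - E2 - E2 \<in> L" by blast
    thus False using distinct by simp
  qed
  show "\<forall>\<^sub>\<approx>z. h (\<sigma> - z) * deriv (\<lambda>z. \<sigma> - z) z = - h z"
    using h_reflect by (rule eventually_mono) (simp add: dI)
  show "\<forall>\<^sub>\<approx>z. deriv g (\<sigma> - z) / g (\<sigma> - z) * deriv (\<lambda>z. \<sigma> - z) z = - (deriv g z / g z)"
    using g_logderiv_reflect by (rule eventually_mono) (simp add: dI)
qed

end

theorem lemma3p1:
  fixes w1 w2 E1 E2 :: complex and g h :: "complex \<Rightarrow> complex"
  defines "\<Lambda> \<equiv> lattice w1 w2"
  defines "P \<equiv> lifted_points w1 w2 {E1, E2}"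
  assumes gens: "lattice_gens w1 w2"
    and distinct: "E1 - E2 \<notin> \<Lambda>"
    and g_mero: "g nicely_meromorphic_on UNIV"
    and g_per: "\<forall>z. g (z + w1) = g z \<and> g (z + w2) = g z"
    and h_mero: "h nicely_meromorphic_on UNIV"
    and h_per: "\<forall>z. h (z + w1) = h z \<and> h (z + w2) = h z"
    and g_zero: "\<not> is_pole g E1 \<and> g E1 = 0"
    and g_pole: "is_pole g E2"
    and h_E1: "is_pole h E1 \<and> zorder h E1 = -1 \<and> residue h E1 = - \<i>"
    and h_E2: "is_pole h E2 \<and> zorder h E2 = -1 \<and> residue h E2 = \<i>"
    and h_hol: "\<forall>z. z \<notin> P \<longrightarrow> \<not> is_pole h z"
    and gh_hol: "\<forall>z. z \<notin> P \<longrightarrow> \<not> is_pole (\<lambda>w. g w * h w) z"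
    and ginvh_hol: "\<forall>z. z \<notin> P \<longrightarrow> \<not> is_pole (\<lambda>w. h w / g w) z"
    and no_common_zero: "\<forall>z. z \<notin> P \<longrightarrow>
           \<not> (((\<lambda>w. g w * h w) \<midarrow>z\<rightarrow> 0) \<and> ((\<lambda>w. h w / g w) \<midarrow>z\<rightarrow> 0))"
    and hor_period: "\<forall>\<gamma>. torus_closed_curve w1 w2 P \<gamma> \<longrightarrow>
           contour_integral \<gamma> (\<lambda>w. g w * h w) = cnj (contour_integral \<gamma> (\<lambda>w. h w / g w))"
    and vert_period: "\<forall>\<gamma>. torus_closed_curve w1 w2 P \<gamma> \<longrightarrow>
           (\<exists>k::int. Re (contour_integral \<gamma> h) = 2 * pi * of_int k)"
    and helicoid_end: "\<forall>E\<in>{E1, E2}. \<not> is_pole (\<lambda>w. deriv g w / g w - \<i> * h w) E"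
  shows "\<exists>I. I holomorphic_on UNIV
           \<and> (\<forall>z w. I z - I w \<in> \<Lambda> \<longleftrightarrow> z - w \<in> \<Lambda>)
           \<and> (\<forall>z. I (I z) - z \<in> \<Lambda>)
           \<and> \<not> (\<forall>z. I z - z \<in> \<Lambda>)
           \<and> I E1 - E2 \<in> \<Lambda>
           \<and> (\<forall>\<^sub>\<approx>z. h (I z) * deriv I z = - h z)
           \<and> (\<forall>\<^sub>\<approx>z. deriv g (I z) / g (I z) * deriv I z = - (deriv g z / g z))"
proof -
  interpret helicoid_data w1 w2 E1 E2 g h
    using gens distinct g_mero g_per h_mero h_per g_pole h_E1 h_E2 h_hol gh_hol ginvh_hol
      no_common_zero helicoid_end
    unfolding \<Lambda>_def P_def by unfold_locales
  show ?thesis unfolding \<Lambda>_def by (rule helicoid_involution)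
qed

end
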